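(* The function $\Psi(\lambda_i):=\max\{\operatorname{argmin}_{\lambda_{i-1}}(F_{i-1}(\lambda_{i-1})+f_i(\lambda_{i-1},\lambda_i))\}$ is monotone (non-decreasing) in $\lambda_i$.
   Context: Semi-discrete setting: $P$ and $Q$ are polygonal curves in $\mathbb{R}^d$, $\rho,s\in\mathbb{R}$, $Q(y)$ is the point of $Q$ at arc length $y\in[0,|Q|]$, and $\theta_\rho(p,q)=1$ if the Euclidean distance of $p,q$ exceeds $\rho$ and $0$ otherwise. Let $x_i$ be the arc length of $P$ up to its $i$-th vertex; the hiker stands at a fixed vertex of $P$ during each interval $[x_{i-1},x_i]$, and $h(t)$ denotes its position at time $t$. For $a,b\in[0,|Q|]$, $f_i(a,b)$ is the minimum of $\int_{x_{i-1}}^{x_i}\theta_\rho(h(t),Q(\gamma(t)))\,dt$ over differentiable $\gamma:[x_{i-1},x_i]\to[0,|Q|]$ with $|\gamma'|\le s$, $\gamma(x_{i-1})=a$, $\gamma(x_i)=b$ ($\infty$ if none exists). $F_i(\lambda)$ is the minimum cost $\int_0^{x_i}\theta_\rho(h(t),Q(\gamma(t)))\,dt$ over all speed-bounded dog traversals $\gamma$ starting at $\gamma(0)=0$ and ending at $\gamma(x_i)=\lambda$; equivalently $F_i(\lambda_i)=\min_{\lambda_{i-1}}(F_{i-1}(\lambda_{i-1})+f_i(\lambda_{i-1},\lambda_i))$. *)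

theory Defs
  imports "HOL-Analysis.Analysis"
begin

text \<open>Polygonal curves are given by their (nonempty) list of vertices.\<close>

definition theta :: "real \<Rightarrow> 'a::metric_space \<Rightarrow> 'a \<Rightarrow> real" where
  "theta \<rho> p q = (if dist p q > \<rho> then 1 else 0)"

fun curve_len :: "'a::metric_space list \<Rightarrow> real" where
  "curve_len [] = 0"
| "curve_len [_] = 0"
| "curve_len (p # q # r) = dist p q + curve_len (q # r)"

text \<open>Point of a polygonal curve at arc length y (meaningful for y in [0, curve_len]).\<close>
fun curve_pt :: "'a::real_normed_vector list \<Rightarrow> real \<Rightarrow> 'a" where
  "curve_pt [] y = 0"
| "curve_pt [q] y = q"
| "curve_pt (q # q' # qs) y =
     (if y \<le> dist q q' then q + (y / dist q q') *\<^sub>R (q' - q)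
      else curve_pt (q' # qs) (y - dist q q'))"

text \<open>Arc length of P up to its i-th vertex (vertices indexed from 0; x_0 = 0).\<close>
definition vx :: "'a::metric_space list \<Rightarrow> nat \<Rightarrow> real" where
  "vx P i = curve_len (take (Suc i) P)"

text \<open>The hiker stands at a fixed vertex of P during each interval (x_{j-1}, x_j); endpoint values are irrelevant (measure zero).\<close>
definition hiker_on_vertices :: "'a::metric_space list \<Rightarrow> (real \<Rightarrow> 'a) \<Rightarrow> bool" where
  "hiker_on_vertices P h \<longleftrightarrow>
     (\<forall>j. 1 \<le> j \<and> j < length P \<longrightarrow>
        (\<exists>v\<in>set P. \<forall>t\<in>{vx P (j - 1)<..<vx P j}. h t = v))"

definition speed_bounded :: "real \<Rightarrow> real \<Rightarrow> real \<Rightarrow> (real \<Rightarrow> real) \<Rightarrow> bool" where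
  "speed_bounded s a b \<gamma> \<longleftrightarrow>
     (\<exists>\<gamma>'. \<forall>t\<in>{a..b}. (\<gamma> has_real_derivative \<gamma>' t) (at t within {a..b}) \<and> \<bar>\<gamma>' t\<bar> \<le> s)"

definition dog_paths ::
  "'a::real_normed_vector list \<Rightarrow> real \<Rightarrow> real \<Rightarrow> real \<Rightarrow> real \<Rightarrow> real \<Rightarrow> (real \<Rightarrow> real) set" where
  "dog_paths Q s a b \<alpha> \<beta> =
     {\<gamma>. speed_bounded s a b \<gamma> \<and> \<gamma> ` {a..b} \<subseteq> {0..curve_len Q} \<and> \<gamma> a = \<alpha> \<and> \<gamma> b = \<beta>}"

definition cost ::
  "real \<Rightarrow> (real \<Rightarrow> 'a::real_normed_vector) \<Rightarrow> 'a list \<Rightarrow> real \<Rightarrow> real \<Rightarrow> (real \<Rightarrow> real) \<Rightarrow> real" where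
  "cost \<rho> h Q a b \<gamma> = integral {a..b} (\<lambda>t. theta \<rho> (h t) (curve_pt Q (\<gamma> t)))"

text \<open>f_i(a,b): minimum cost over [x_{i-1}, x_i]; infinity if no admissible path.\<close>
definition f_cost ::
  "real \<Rightarrow> real \<Rightarrow> (real \<Rightarrow> 'a::real_normed_vector) \<Rightarrow> 'a list \<Rightarrow> 'a list \<Rightarrow> nat \<Rightarrow> real \<Rightarrow> real \<Rightarrow> ereal" where
  "f_cost \<rho> s h P Q i a b =
     (INF \<gamma>\<in>dog_paths Q s (vx P (i - 1)) (vx P i) a b. ereal (cost \<rho> h Q (vx P (i - 1)) (vx P i) \<gamma>))"

definition F_cost ::
  "real \<Rightarrow> real \<Rightarrow> (real \<Rightarrow> 'a::real_normed_vector) \<Rightarrow> 'a list \<Rightarrow> 'a list \<Rightarrow> nat \<Rightarrow> real \<Rightarrow> ereal" where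
  "F_cost \<rho> s h P Q i lam =
     (INF \<gamma>\<in>dog_paths Q s 0 (vx P i) 0 lam. ereal (cost \<rho> h Q 0 (vx P i) \<gamma>))"

definition Psi ::
  "real \<Rightarrow> real \<Rightarrow> (real \<Rightarrow> 'a::real_normed_vector) \<Rightarrow> 'a list \<Rightarrow> 'a list \<Rightarrow> nat \<Rightarrow> real \<Rightarrow> real" where
  "Psi \<rho> s h P Q i lam =
     (GREATEST \<mu>. \<mu> \<in> {0..curve_len Q} \<and>
        (\<forall>\<nu>\<in>{0..curve_len Q}.
           F_cost \<rho> s h P Q (i - 1) \<mu> + f_cost \<rho> s h P Q i \<mu> lam
           \<le> F_cost \<rho> s h P Q (i - 1) \<nu> + f_cost \<rho> s h P Q i \<nu> lam))"

end

theory Submission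
  imports Defs
begin

(* Write \<Phi>_\<lambda>(\<mu>) = F_{i-1}(\<mu>) + f_i(\<mu>, \<lambda>). The heart of the argument is the Monge inequality
   f_i(\<mu>1, \<lambda>2) + f_i(\<mu>2, \<lambda>1) \<le> f_i(\<mu>1, \<lambda>1) + f_i(\<mu>2, \<lambda>2) for \<mu>2 < \<mu>1 and \<lambda>1 < \<lambda>2:
   during [x_{i-1}, x_i] the hiker stands still, near-optimal dog paths \<mu>1 \<leadsto> \<lambda>1 and \<mu>2 \<leadsto> \<lambda>2
   cross, and exchanging their tails at the crossing gives paths \<mu>1 \<leadsto> \<lambda>2 and \<mu>2 \<leadsto> \<lambda>1 of
   the same total cost. Dog paths must be differentiable, so the kink at the crossing is removed
   by bending the paths nearby, at arbitrarily small cost: while the hiker stands at w, the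
   cost of a path is the time it spends far from w, and a dog of speed at most s sweeps the far
   positions at rate at most s, so moving the end of a path by d costs at most d / s (plus an
   arbitrarily small error) per stationary piece of the hiker.
   If \<Psi>(\<lambda>2) < \<Psi>(\<lambda>1) for \<lambda>1 < \<lambda>2, then \<Psi>(\<lambda>1) minimises \<Phi>_\<lambda>1 while \<Psi>(\<lambda>2) is strictly
   better than \<Psi>(\<lambda>1) for \<Phi>_\<lambda>2, and adding the two inequalities contradicts the Monge
   inequality. \<Psi> is well defined: \<Phi>_\<lambda> is finite exactly on a closed set of \<mu>, where by the same
   estimate it is Lipschitz, so its minimisers form a nonempty compact set. *)

lemma curve_pt_Cons_0: "curve_pt (q # qs) 0 = q"
  by (cases qs) auto

lemma continuous_on_curve_pt: "continuous_on UNIV (curve_pt Q)"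
proof (induction Q rule: curve_len.induct)
  case (3 q q' r)
  let ?d = "dist q q'"
  have eq: "curve_pt (q # q' # r) =
      (\<lambda>y. if y \<le> ?d then q + (y / ?d) *\<^sub>R (q' - q) else curve_pt (q' # r) (y - ?d))"
    by auto
  show ?case unfolding eq
  proof (rule continuous_on_cases_le[where h="\<lambda>y. y"])
    show "continuous_on {y \<in> UNIV. y \<le> ?d} (\<lambda>y. q + (y / ?d) *\<^sub>R (q' - q))"
      by (cases "?d = 0") (auto intro!: continuous_intros)
    show "continuous_on {y \<in> UNIV. ?d \<le> y} (\<lambda>y. curve_pt (q' # r) (y - ?d))"
      by (rule continuous_on_compose2[OF 3]) (auto intro: continuous_intros)
  qed (auto simp: curve_pt_Cons_0 intro: continuous_intros)
qed simp_all

lemma curve_len_nonneg: "0 \<le> curve_len Q"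
  by (induction Q rule: curve_len.induct) auto

lemma curve_len_append_single: "xs \<noteq> [] \<Longrightarrow> curve_len (xs @ [y]) = curve_len xs + dist (last xs) y"
  by (induction xs rule: curve_len.induct) auto

lemma vx_0: "P \<noteq> [] \<Longrightarrow> vx P 0 = 0"
  unfolding vx_def by (cases P) auto

lemma vx_le_Suc:
  assumes "Suc j < length P"
  shows "vx P j \<le> vx P (Suc j)"
proof -
  have "take (Suc (Suc j)) P = take (Suc j) P @ [P ! Suc j]"
    using assms by (simp add: take_Suc_conv_app_nth)
  moreover have "take (Suc j) P \<noteq> []" using assms by (cases P) auto
  ultimately show ?thesis unfolding vx_def by (simp add: curve_len_append_single)
qed

section \<open>Measure-theoretic tools on the real line\<close>

lemma sets_lebesgue_open: "open X \<Longrightarrow> X \<in> sets lebesgue"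
  by (metis borel_open sets_completionI_sets sets_lborel)

lemma sets_lebesgue_closed: "closed X \<Longrightarrow> X \<in> sets lebesgue"
  by (metis borel_closed sets_completionI_sets sets_lborel)

lemma measure_lebesgue_Icc: "measure lebesgue {a..b::real} = max 0 (b - a)"
  by fastforce

lemma measure_Int_le_cover:
  fixes X :: "real set"
  assumes X: "open X" and cover: "{a..b} \<subseteq> {c..d} \<union> {u..v}"
  shows "measure lebesgue (X \<inter> {a..b}) \<le> measure lebesgue (X \<inter> {c..d}) + measure lebesgue {u..v}"
proof -
  have XI: "X \<inter> I \<in> sets lebesgue" if "closed I" for I
    using X that by (intro sets.Int sets_lebesgue_open sets_lebesgue_closed)
  have "(X \<inter> {c..d}) \<union> {u..v} \<in> lmeasurable"
    using XI[of "{c..d}"] sets_lebesgue_closed[of "{u..v}"]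
    by (intro bounded_set_imp_lmeasurable sets.Un) (auto simp: bounded_Int bounded_Un)
  then have "measure lebesgue (X \<inter> {a..b}) \<le> measure lebesgue ((X \<inter> {c..d}) \<union> {u..v})"
    using cover XI[of "{a..b}"] by (intro measure_mono_fmeasurable) auto
  also have "\<dots> \<le> measure lebesgue (X \<inter> {c..d}) + measure lebesgue {u..v}"
    by (rule measure_Un_le[OF XI sets_lebesgue_closed]) auto
  finally show ?thesis .
qed

lemma measure_image_le_of_deriv_bound:
  fixes f f' :: "real \<Rightarrow> real"
  assumes S: "S \<in> lmeasurable"
    and der: "\<And>x. x \<in> S \<Longrightarrow> (f has_real_derivative f' x) (at x within S)"
    and bnd: "\<And>x. x \<in> S \<Longrightarrow> \<bar>f' x\<bar> \<le> B"
  shows "f ` S \<in> lmeasurable \<and> measure lebesgue (f ` S) \<le> B * measure lebesgue S"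
proof -
  let ?lift = "vec :: real \<Rightarrow> real^1"
  let ?drop = "(\<lambda>x::real^1. x $ 1)"
  have dropvec: "?drop ` (?lift ` X) = X" for X by (auto simp: image_iff)
  have meas_transfer: "?lift ` X \<in> lmeasurable \<and> measure lebesgue (?lift ` X) = measure lebesgue X"
    if "X \<in> lmeasurable" for X
  proof -
    have "((\<lambda>x. 1::real) has_integral measure lebesgue X) X"
      using that lmeasure_integral[OF that] lmeasurable_iff_integrable_on
      by (metis has_integral_integral)
    then have "(((\<lambda>x. 1::real) \<circ> ?lift) has_integral measure lebesgue X) (?drop ` (?lift ` X))"
      by (simp add: dropvec o_def)
    then have "((\<lambda>x. 1::real) has_integral measure lebesgue X) (?lift ` X)"
      by (rule has_integral_vec1_D)
    then show ?thesis
      by (metis has_integral_integrable integral_unique lmeasurable_iff_integrable_on lmeasure_integral)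
  qed
  have meas_back: "X \<in> lmeasurable \<and> measure lebesgue X = measure lebesgue (?lift ` X)"
    if "?lift ` X \<in> lmeasurable" for X
  proof -
    have "((\<lambda>x. 1::real) has_integral measure lebesgue (?lift ` X)) (?lift ` X)"
      using that lmeasure_integral[OF that] lmeasurable_iff_integrable_on
      by (metis has_integral_integral)
    then have "(((\<lambda>x. 1::real) \<circ> ?lift) has_integral measure lebesgue (?lift ` X)) (?drop ` (?lift ` X))"
      by (rule has_integral_vec1_I)
    then have "((\<lambda>x. 1::real) has_integral measure lebesgue (?lift ` X)) X"
      by (simp add: dropvec o_def)
    then show ?thesis
      by (metis has_integral_integrable integral_unique lmeasurable_iff_integrable_on lmeasure_integral)
  qed
  have S1: "?lift ` S \<in> lmeasurable" and mS1: "measure lebesgue (?lift ` S) = measure lebesgue S"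
    using meas_transfer[OF S] by auto
  have der': "((\<lambda>x. ?lift (f (?drop x))) has_derivative (*\<^sub>R) (f' (?drop x))) (at x within ?lift ` S)"
    if xin: "x \<in> ?lift ` S" for x
  proof -
    obtain z where z: "z \<in> S" "x = ?lift z" using xin by blast
    have "((\<lambda>x. vec (f (x $ 1))) has_derivative (*\<^sub>R) (f' z)) (at (vec z) within ?lift ` S)"
      using der [OF z(1)]
      by (simp add: has_real_derivative_iff_has_vector_derivative has_vector_derivative_def has_derivative_vector_1)
    then show ?thesis using z by simp
  qed
  have bnd': "\<bar>det (matrix ((*\<^sub>R) (f' (?drop x)) :: real^1 \<Rightarrow> real^1))\<bar> \<le> B" if "x \<in> ?lift ` S" for x
    using that bnd by auto
  have int: "(\<lambda>x. \<bar>det (matrix ((*\<^sub>R) (f' (?drop x)) :: real^1 \<Rightarrow> real^1))\<bar>) integrable_on ?lift ` S"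
  proof (rule measurable_bounded_by_integrable_imp_integrable_real)
    show "(\<lambda>x. \<bar>det (matrix ((*\<^sub>R) (f' (?drop x)) :: real^1 \<Rightarrow> real^1))\<bar>) \<in> borel_measurable (lebesgue_on (?lift ` S))"
      using borel_measurable_det_Jacobian[OF fmeasurableD[OF S1] der'] by (intro measurable) auto
    show "(\<lambda>x. B) integrable_on ?lift ` S" using S1 by (rule integrable_on_const)
    show "?lift ` S \<in> sets lebesgue" using S1 by (rule fmeasurableD)
  qed (use bnd' in auto)
  have "(\<lambda>x. ?lift (f (?drop x))) ` (?lift ` S) \<in> lmeasurable"
       "measure lebesgue ((\<lambda>x. ?lift (f (?drop x))) ` (?lift ` S)) \<le> B * measure lebesgue (?lift ` S)"
    using measurable_bounded_differentiable_image[OF S1 der' int bnd']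
      measure_bounded_differentiable_image[OF S1 der' int bnd'] by auto
  moreover have "(\<lambda>x. ?lift (f (?drop x))) ` (?lift ` S) = ?lift ` (f ` S)"
    by (auto simp: image_iff)
  ultimately show ?thesis using meas_back[of "f ` S"] mS1 by auto
qed

section \<open>Cost while the hiker stands still\<close>

lemma theta_bounds: "0 \<le> theta \<rho> p q" "theta \<rho> p q \<le> 1"
  by (auto simp: theta_def)

definition far_positions :: "real \<Rightarrow> 'a::real_normed_vector \<Rightarrow> 'a list \<Rightarrow> real set" where
  "far_positions \<rho> w Q = {y. \<rho> < dist w (curve_pt Q y)}"

lemma open_far_positions: "open (far_positions \<rho> w Q)"
proof -
  have "continuous_on UNIV (\<lambda>y. dist w (curve_pt Q y))"
    by (rule continuous_on_compose2[OF continuous_on_dist[OF continuous_on_const continuous_on_id] continuous_on_curve_pt]) auto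
  then have "open ((\<lambda>y. dist w (curve_pt Q y)) -` {\<rho><..})"
    by (simp add: continuous_on_open_vimage)
  then show ?thesis unfolding far_positions_def by (simp add: vimage_def)
qed

lemma integral_theta_stationary:
  fixes \<gamma> :: "real \<Rightarrow> real" and h :: "real \<Rightarrow> 'a::real_normed_vector"
  assumes uv: "u \<le> v" and hw: "\<And>t. t \<in> {u<..<v} \<Longrightarrow> h t = w" and cont: "continuous_on {u..v} \<gamma>"
  shows "{t\<in>{u..v}. \<gamma> t \<in> far_positions \<rho> w Q} \<in> lmeasurable"
    and "(\<lambda>t. theta \<rho> (h t) (curve_pt Q (\<gamma> t))) integrable_on {u..v}"
    and "integral {u..v} (\<lambda>t. theta \<rho> (h t) (curve_pt Q (\<gamma> t))) = measure lebesgue {t\<in>{u..v}. \<gamma> t \<in> far_positions \<rho> w Q}"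
proof -
  let ?S = "{t\<in>{u..v}. \<gamma> t \<in> far_positions \<rho> w Q}"
  have "openin (top_of_set {u..v}) ({u..v} \<inter> \<gamma> -` far_positions \<rho> w Q)"
    by (rule continuous_openin_preimage_gen[OF cont open_far_positions])
  then have "{u..v} \<inter> \<gamma> -` far_positions \<rho> w Q \<in> sets lebesgue"
    by (rule lebesgue_openin) simp
  moreover have Seq: "?S = {u..v} \<inter> \<gamma> -` far_positions \<rho> w Q" by auto
  ultimately have "?S \<in> sets lebesgue" by simp
  moreover have "bounded ?S" by (rule bounded_subset[of "{u..v}"]) auto
  ultimately show Sm: "?S \<in> lmeasurable"
    by (intro bounded_set_imp_lmeasurable) auto
  have ind: "(\<lambda>t. if t \<in> ?S then 1 else 0::real) integrable_on {u..v}"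
  proof -
    have "?S \<inter> {u..v} = ?S" by auto
    then have "(\<lambda>t. 1::real) integrable_on (?S \<inter> {u..v})"
      using Sm lmeasurable_iff_integrable_on by metis
    then show ?thesis by (simp only: integrable_restrict_Int)
  qed
  have eqf: "theta \<rho> (h t) (curve_pt Q (\<gamma> t)) = (if t \<in> ?S then 1 else 0)" if "t \<in> {u..v} - {u,v}" for t
    using that hw[of t] by (auto simp: theta_def far_positions_def)
  show "(\<lambda>t. theta \<rho> (h t) (curve_pt Q (\<gamma> t))) integrable_on {u..v}"
    by (rule integrable_spike[OF ind, of "{u,v}"]) (use eqf in auto)
  have "integral {u..v} (\<lambda>t. theta \<rho> (h t) (curve_pt Q (\<gamma> t))) = integral {u..v} (\<lambda>t. if t \<in> ?S then 1 else 0::real)"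
    by (rule integral_spike[of "{u,v}"]) (use eqf in auto)
  also have "\<dots> = integral (?S \<inter> {u..v}) (\<lambda>t. 1::real)"
    by (rule integral_restrict_Int)
  also have "?S \<inter> {u..v} = ?S" by auto
  also have "integral ?S (\<lambda>t. 1::real) = measure lebesgue ?S"
    using lmeasure_integral[OF Sm] by simp
  finally show "integral {u..v} (\<lambda>t. theta \<rho> (h t) (curve_pt Q (\<gamma> t))) = measure lebesgue ?S" .
qed

text \<open>\<^const>\<open>speed_bounded\<close> with the derivative as an explicit argument, so that paths can be
  glued and reshaped together with their derivatives.\<close>

definition speed_bounded_deriv ::
  "real \<Rightarrow> real \<Rightarrow> real \<Rightarrow> (real \<Rightarrow> real) \<Rightarrow> (real \<Rightarrow> real) \<Rightarrow> bool" where
  "speed_bounded_deriv s u v \<gamma> \<gamma>' \<longleftrightarrow>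
     (\<forall>t\<in>{u..v}. (\<gamma> has_real_derivative \<gamma>' t) (at t within {u..v}) \<and> \<bar>\<gamma>' t\<bar> \<le> s)"

lemma speed_bounded_deriv_continuous_on: "speed_bounded_deriv s u v \<gamma> \<gamma>' \<Longrightarrow> continuous_on {u..v} \<gamma>"
  unfolding speed_bounded_deriv_def by (rule DERIV_continuous_on) auto

lemma speed_bounded_deriv_lipschitz:
  assumes "speed_bounded_deriv s u v \<gamma> \<gamma>'" "x \<in> {u..v}" "y \<in> {u..v}"
  shows "\<bar>\<gamma> x - \<gamma> y\<bar> \<le> s * \<bar>x - y\<bar>"
  using field_differentiable_bound[of "{u..v}" \<gamma> \<gamma>' s x y] assms unfolding speed_bounded_deriv_def
  by (auto simp: convex_real_interval)

lemma speed_bounded_deriv_subinterval: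
  assumes "speed_bounded_deriv s u v \<gamma> \<gamma>'" "u \<le> a" "b \<le> v"
  shows "speed_bounded_deriv s a b \<gamma> \<gamma>'"
  unfolding speed_bounded_deriv_def
proof
  fix t assume t: "t \<in> {a..b}"
  then have "t \<in> {u..v}" using assms by auto
  then have "(\<gamma> has_real_derivative \<gamma>' t) (at t within {u..v}) \<and> \<bar>\<gamma>' t\<bar> \<le> s"
    using assms(1) unfolding speed_bounded_deriv_def by auto
  moreover have "{a..b} \<subseteq> {u..v}" using assms by auto
  ultimately show "(\<gamma> has_real_derivative \<gamma>' t) (at t within {a..b}) \<and> \<bar>\<gamma>' t\<bar> \<le> s"
    using DERIV_subset by blast
qed

lemma dog_paths_iff: "\<gamma> \<in> dog_paths Q s a b x y \<longleftrightarrow>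
   (\<exists>\<gamma>'. speed_bounded_deriv s a b \<gamma> \<gamma>') \<and> \<gamma> ` {a..b} \<subseteq> {0..curve_len Q} \<and> \<gamma> a = x \<and> \<gamma> b = y"
  unfolding dog_paths_def speed_bounded_def speed_bounded_deriv_def by auto

lemma far_measure_le_cost:
  fixes \<gamma> \<gamma>' :: "real \<Rightarrow> real" and h :: "real \<Rightarrow> 'a::real_normed_vector"
  assumes uv: "u \<le> v" and hw: "\<And>t. t \<in> {u<..<v} \<Longrightarrow> h t = w" and p: "speed_bounded_deriv s u v \<gamma> \<gamma>'"
  shows "measure lebesgue (far_positions \<rho> w Q \<inter> {min (\<gamma> u) (\<gamma> v)..max (\<gamma> u) (\<gamma> v)})
          \<le> s * integral {u..v} (\<lambda>t. theta \<rho> (h t) (curve_pt Q (\<gamma> t)))"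
proof -
  let ?S = "{t\<in>{u..v}. \<gamma> t \<in> far_positions \<rho> w Q}"
  have cont: "continuous_on {u..v} \<gamma>" using p by (rule speed_bounded_deriv_continuous_on)
  note pc = integral_theta_stationary[OF uv hw cont, of _ \<rho> Q]
  have Sm: "?S \<in> lmeasurable" using pc(1) by simp
  have der: "(\<gamma> has_real_derivative \<gamma>' x) (at x within ?S)" if "x \<in> ?S" for x
  proof -
    have "(\<gamma> has_real_derivative \<gamma>' x) (at x within {u..v})" using p that unfolding speed_bounded_deriv_def by auto
    then show ?thesis by (rule DERIV_subset) auto
  qed
  have bnd: "\<bar>\<gamma>' x\<bar> \<le> s" if "x \<in> ?S" for x using p that unfolding speed_bounded_deriv_def by auto
  note im = measure_image_le_of_deriv_bound[OF Sm der bnd]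
  have sub: "far_positions \<rho> w Q \<inter> {min (\<gamma> u) (\<gamma> v)..max (\<gamma> u) (\<gamma> v)} \<subseteq> \<gamma> ` ?S"
  proof
    fix y assume y: "y \<in> far_positions \<rho> w Q \<inter> {min (\<gamma> u) (\<gamma> v)..max (\<gamma> u) (\<gamma> v)}"
    have "\<exists>x. u \<le> x \<and> x \<le> v \<and> \<gamma> x = y"
    proof (cases "\<gamma> u \<le> \<gamma> v")
      case True
      then show ?thesis using y IVT'[of \<gamma> u y v, OF _ _ uv cont] by auto
    next
      case False
      then show ?thesis using y IVT2'[of \<gamma> v y u, OF _ _ uv cont] by auto
    qed
    then show "y \<in> \<gamma> ` ?S" using y by force
  qed
  have Bm: "far_positions \<rho> w Q \<inter> {min (\<gamma> u) (\<gamma> v)..max (\<gamma> u) (\<gamma> v)} \<in> sets lebesgue"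
    using open_far_positions by (intro sets.Int sets_lebesgue_open sets_lebesgue_closed) auto
  have "measure lebesgue (far_positions \<rho> w Q \<inter> {min (\<gamma> u) (\<gamma> v)..max (\<gamma> u) (\<gamma> v)}) \<le> measure lebesgue (\<gamma> ` ?S)"
    using im sub Bm by (intro measure_mono_fmeasurable) auto
  also have "\<dots> \<le> s * measure lebesgue ?S" using im by auto
  also have "measure lebesgue ?S = integral {u..v} (\<lambda>t. theta \<rho> (h t) (curve_pt Q (\<gamma> t)))"
    using pc(3) by simp
  finally show ?thesis .
qed

lemma affine_mem_Icc_iff:
  fixes a c u v t :: real
  assumes "c \<noteq> 0" "u \<le> v"
  shows "a + c * (t - u) \<in> {min a (a + c * (v - u))..max a (a + c * (v - u))} \<longleftrightarrow> t \<in> {u..v}"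
proof (cases "c > 0")
  case True
  then have "0 \<le> c * (v - u)" using assms by simp
  then show ?thesis using True by (auto simp: zero_le_mult_iff mult_le_cancel_left_pos)
next
  case False
  then have c: "c < 0" using assms by simp
  then have "c * (v - u) \<le> 0" using assms by (simp add: mult_le_0_iff)
  then show ?thesis using c by (auto simp: mult_le_0_iff mult_le_cancel_left_neg)
qed

lemma affine_preimage_Icc:
  fixes a c u v :: real
  assumes "c \<noteq> 0" "u \<le> v"
  shows "{t \<in> {u..v}. a + c * (t - u) \<in> X} = (\<lambda>y. u + (y - a) / c) ` (X \<inter> {min a (a + c * (v - u))..max a (a + c * (v - u))})"
proof
  show "{t \<in> {u..v}. a + c * (t - u) \<in> X} \<subseteq> (\<lambda>y. u + (y - a) / c) ` (X \<inter> {min a (a + c * (v - u))..max a (a + c * (v - u))})"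
  proof
    fix t assume t: "t \<in> {t \<in> {u..v}. a + c * (t - u) \<in> X}"
    have "t = u + (a + c * (t - u) - a) / c" using assms by simp
    then show "t \<in> (\<lambda>y. u + (y - a) / c) ` (X \<inter> {min a (a + c * (v - u))..max a (a + c * (v - u))})"
      using t affine_mem_Icc_iff[OF assms, of a t] by (intro image_eqI) auto
  qed
  show "(\<lambda>y. u + (y - a) / c) ` (X \<inter> {min a (a + c * (v - u))..max a (a + c * (v - u))}) \<subseteq> {t \<in> {u..v}. a + c * (t - u) \<in> X}"
  proof
    fix t assume "t \<in> (\<lambda>y. u + (y - a) / c) ` (X \<inter> {min a (a + c * (v - u))..max a (a + c * (v - u))})"
    then obtain y where y: "y \<in> X" "y \<in> {min a (a + c * (v - u))..max a (a + c * (v - u))}" "t = u + (y - a) / c"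
      by blast
    have "a + c * (t - u) = y" using y(3) assms by simp
    then show "t \<in> {t \<in> {u..v}. a + c * (t - u) \<in> X}" using y affine_mem_Icc_iff[OF assms, of a t] by auto
  qed
qed
lemma straight_cost_le_far_measure:
  fixes h :: "real \<Rightarrow> 'a::real_normed_vector"
  assumes uv: "u \<le> v" and hw: "\<And>t. t \<in> {u<..<v} \<Longrightarrow> h t = w" and s: "s > 0" and c: "\<bar>c\<bar> = s"
  shows "s * integral {u..v} (\<lambda>t. theta \<rho> (h t) (curve_pt Q (a + c * (t - u))))
          \<le> measure lebesgue (far_positions \<rho> w Q \<inter> {min a (a + c * (v - u))..max a (a + c * (v - u))})"
proof -
  let ?B = "far_positions \<rho> w Q \<inter> {min a (a + c * (v - u))..max a (a + c * (v - u))}"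
  let ?li = "\<lambda>y. u + (y - a) / c"
  have c0: "c \<noteq> 0" using c s by auto
  have Bm: "?B \<in> lmeasurable"
    using open_far_positions
    by (intro bounded_set_imp_lmeasurable sets.Int sets_lebesgue_open sets_lebesgue_closed) (auto simp: bounded_Int)
  have der: "(?li has_real_derivative (1 / c)) (at y within ?B)" for y
    using c0 by (auto intro!: derivative_eq_intros)
  have "integral {u..v} (\<lambda>t. theta \<rho> (h t) (curve_pt Q (a + c * (t - u))))
      = measure lebesgue {t \<in> {u..v}. a + c * (t - u) \<in> far_positions \<rho> w Q}"
    by (rule integral_theta_stationary(3)[OF uv hw]) (auto intro!: continuous_intros)
  also have "\<dots> = measure lebesgue (?li ` ?B)"
    by (simp only: affine_preimage_Icc[OF c0 uv])
  also have "\<dots> \<le> 1 / s * measure lebesgue ?B"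
    using measure_image_le_of_deriv_bound[OF Bm der, of "1 / s"] c s by simp
  finally show ?thesis using s by (simp add: field_simps)
qed

section \<open>Hikers that stand still on finitely many pieces\<close>

definition stationary_pieces :: "nat \<Rightarrow> (nat \<Rightarrow> real) \<Rightarrow> (real \<Rightarrow> 'a) \<Rightarrow> real \<Rightarrow> real \<Rightarrow> bool" where
  "stationary_pieces k b h A B \<longleftrightarrow> b 0 = A \<and> b k = B \<and> (\<forall>j<k. b j \<le> b (Suc j)) \<and>
     (\<forall>j<k. \<exists>w. \<forall>t\<in>{b j<..<b (Suc j)}. h t = w)"

lemma stationary_pieces_mono:
  assumes "stationary_pieces k b h A B" "j \<le> l" "l \<le> k"
  shows "b j \<le> b l"
  using assms(2,3)
proof (induction l)
  case 0 then show ?case by simp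
next
  case (Suc l)
  show ?case
  proof (cases "j = Suc l")
    case True then show ?thesis by simp
  next
    case False
    then have "b j \<le> b l" using Suc by auto
    also have "b l \<le> b (Suc l)" using assms(1) Suc.prems unfolding stationary_pieces_def by auto
    finally show ?thesis .
  qed
qed

lemma stationary_pieces_le: "stationary_pieces k b h A B \<Longrightarrow> A \<le> B"
  using stationary_pieces_mono[of k b h A B 0 k] unfolding stationary_pieces_def by auto

lemma stationary_pieces_Suc:
  assumes "stationary_pieces (Suc k) b h A B"
  shows "stationary_pieces k b h A (b k)" "A \<le> b k" "b k \<le> B" "\<exists>w. \<forall>t\<in>{b k<..<B}. h t = w"
proof -
  show "stationary_pieces k b h A (b k)" using assms unfolding stationary_pieces_def by auto
  show "A \<le> b k" using stationary_pieces_mono[OF assms, of 0 k] assms unfolding stationary_pieces_def by auto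
  show "b k \<le> B" using assms unfolding stationary_pieces_def by auto
  show "\<exists>w. \<forall>t\<in>{b k<..<B}. h t = w" using assms unfolding stationary_pieces_def by auto
qed

lemma stationary_pieces_clip:
  assumes "stationary_pieces k b h A B" "A \<le> u" "u \<le> v" "v \<le> B"
  shows "stationary_pieces k (\<lambda>j. max u (min v (b j))) h u v"
  unfolding stationary_pieces_def
proof (intro conjI allI impI)
  show "max u (min v (b 0)) = u" using assms unfolding stationary_pieces_def by auto
  show "max u (min v (b k)) = v" using assms unfolding stationary_pieces_def by auto
  fix j assume j: "j < k"
  have bj: "b j \<le> b (Suc j)" using assms j unfolding stationary_pieces_def by auto
  then show "max u (min v (b j)) \<le> max u (min v (b (Suc j)))" by auto
  obtain w where w: "\<forall>t\<in>{b j<..<b (Suc j)}. h t = w" using assms(1) j unfolding stationary_pieces_def by blast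
  show "\<exists>w. \<forall>t\<in>{max u (min v (b j))<..<max u (min v (b (Suc j)))}. h t = w"
  proof (rule exI[of _ w], rule ballI)
    fix t assume "t \<in> {max u (min v (b j))<..<max u (min v (b (Suc j)))}"
    then have "t \<in> {b j<..<b (Suc j)}" using assms(3)
      by (auto simp: min_le_iff_disj le_max_iff_disj less_max_iff_disj max_less_iff_conj min_less_iff_disj)
    then show "h t = w" using w by auto
  qed
qed

lemma stationary_pieces_integrable:
  fixes h :: "real \<Rightarrow> 'a::real_normed_vector"
  assumes "stationary_pieces k b h A B" "continuous_on {A..B} \<gamma>"
  shows "(\<lambda>t. theta \<rho> (h t) (curve_pt Q (\<gamma> t))) integrable_on {A..B}"
  using assms
proof (induction k arbitrary: B)
  case 0
  then have "A = B" unfolding stationary_pieces_def by auto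
  then show ?case by (metis box_real(2) integrable_on_refl)
next
  case (Suc k)
  note S = stationary_pieces_Suc[OF Suc.prems(1)]
  obtain w where w: "\<forall>t\<in>{b k<..<B}. h t = w" using S(4) by auto
  have i1: "(\<lambda>t. theta \<rho> (h t) (curve_pt Q (\<gamma> t))) integrable_on {A..b k}"
    using Suc.IH[OF S(1)] continuous_on_subset[OF Suc.prems(2)] S by auto
  have i2: "(\<lambda>t. theta \<rho> (h t) (curve_pt Q (\<gamma> t))) integrable_on {b k..B}"
    using integral_theta_stationary(2)[OF S(3), of h w \<gamma> \<rho> Q] w continuous_on_subset[OF Suc.prems(2)] S by auto
  show ?case by (rule Henstock_Kurzweil_Integration.integrable_combine[OF S(2) S(3) i1 i2])
qed

lemma stationary_pieces_single:
  assumes "\<And>t. t \<in> {A<..<B} \<Longrightarrow> h t = w" "A \<le> B"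
  shows "stationary_pieces 1 (\<lambda>j. if j = 0 then A else B) h A B"
  unfolding stationary_pieces_def using assms by auto

lemma stationary_pieces_vx:
  assumes "1 \<le> i" "i < length P" "hiker_on_vertices P h"
  shows "stationary_pieces (i - 1) (vx P) h 0 (vx P (i - 1))"
  unfolding stationary_pieces_def
proof (intro conjI allI impI)
  show "vx P 0 = 0" using assms by (intro vx_0) auto
  show "vx P (i - 1) = vx P (i - 1)" by simp
  fix j assume j: "j < i - 1"
  show "vx P j \<le> vx P (Suc j)" using j assms by (intro vx_le_Suc) auto
  have "1 \<le> Suc j \<and> Suc j < length P" using j assms by auto
  then obtain v where "\<forall>t\<in>{vx P (Suc j - 1)<..<vx P (Suc j)}. h t = v"
    using assms(3) unfolding hiker_on_vertices_def by blast
  then show "\<exists>w. \<forall>t\<in>{vx P j<..<vx P (Suc j)}. h t = w" by auto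
qed

lemma segment_cover:
  fixes e lp lq gp gq d :: real
  assumes e: "e = 1 \<or> e = -1"
    and "e * lp \<le> e * lq" "e * gp \<le> e * lp" "e * gq \<le> e * lq" "e * lq \<le> e * gq + d"
  shows "{min lp lq..max lp lq} \<subseteq> {min gp gq..max gp gq} \<union> {min gq (gq + e * d)..max gq (gq + e * d)}"
  using e
proof
  assume "e = 1" then show ?thesis using assms(2-) by (auto simp: min_le_iff_disj le_max_iff_disj)
next
  assume "e = -1" then show ?thesis using assms(2-) by (auto simp: min_le_iff_disj le_max_iff_disj)
qed
lemma straight_piece_cost_le:
  fixes h :: "real \<Rightarrow> 'a::real_normed_vector"
  assumes cv: "c \<le> v" and hw: "\<And>t. t \<in> {c<..<v} \<Longrightarrow> h t = w"
    and p: "speed_bounded_deriv s c v \<gamma> \<gamma>'" and s: "s > 0" and e: "e = 1 \<or> e = -1"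
    and Wc: "a = \<gamma> c + e * W\<^sub>c" "0 \<le> W\<^sub>c" "W\<^sub>c \<le> d"
    and Wv: "a + e * s * (v - c) = \<gamma> v + e * W\<^sub>v" "0 \<le> W\<^sub>v" "W\<^sub>v \<le> d"
  shows "integral {c..v} (\<lambda>t. theta \<rho> (h t) (curve_pt Q (a + e * s * (t - c))))
          \<le> integral {c..v} (\<lambda>t. theta \<rho> (h t) (curve_pt Q (\<gamma> t))) + d / s"
proof -
  let ?X = "far_positions \<rho> w Q"
  let ?b = "a + e * s * (v - c)"
  have "{min a ?b..max a ?b} \<subseteq> {min (\<gamma> c) (\<gamma> v)..max (\<gamma> c) (\<gamma> v)} \<union> {min (\<gamma> v) (\<gamma> v + e * d)..max (\<gamma> v) (\<gamma> v + e * d)}"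
  proof (rule segment_cover[OF e])
    show "e * a \<le> e * ?b" using e cv s by (cases "e = 1") (auto simp: algebra_simps)
    show "e * \<gamma> c \<le> e * a" using e Wc by (cases "e = 1") (auto simp: algebra_simps)
    show "e * \<gamma> v \<le> e * ?b" using e Wv by (cases "e = 1") (auto simp: algebra_simps)
    show "e * ?b \<le> e * \<gamma> v + d" using e Wv by (cases "e = 1") (auto simp: algebra_simps)
  qed
  then have "measure lebesgue (?X \<inter> {min a ?b..max a ?b})
      \<le> measure lebesgue (?X \<inter> {min (\<gamma> c) (\<gamma> v)..max (\<gamma> c) (\<gamma> v)}) + measure lebesgue {min (\<gamma> v) (\<gamma> v + e * d)..max (\<gamma> v) (\<gamma> v + e * d)}"
    by (rule measure_Int_le_cover[OF open_far_positions])
  also have "measure lebesgue {min (\<gamma> v) (\<gamma> v + e * d)..max (\<gamma> v) (\<gamma> v + e * d)} \<le> d"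
    using e Wv by (auto simp: measure_lebesgue_Icc)
  also have "measure lebesgue (?X \<inter> {min (\<gamma> c) (\<gamma> v)..max (\<gamma> c) (\<gamma> v)})
      \<le> s * integral {c..v} (\<lambda>t. theta \<rho> (h t) (curve_pt Q (\<gamma> t)))"
    by (rule far_measure_le_cost[OF cv hw p])
  finally have "measure lebesgue (?X \<inter> {min a ?b..max a ?b})
      \<le> s * integral {c..v} (\<lambda>t. theta \<rho> (h t) (curve_pt Q (\<gamma> t))) + d" by simp
  moreover have "s * integral {c..v} (\<lambda>t. theta \<rho> (h t) (curve_pt Q (a + e * s * (t - c))))
      \<le> measure lebesgue (?X \<inter> {min a ?b..max a ?b})"
    using e s by (intro straight_cost_le_far_measure[OF cv hw s]) auto
  ultimately show ?thesis using s by (simp add: field_simps)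
qed

lemma straight_tail_cost_le:
  fixes h :: "real \<Rightarrow> 'a::real_normed_vector"
  assumes pc: "stationary_pieces k b h u v" and p: "speed_bounded_deriv s u v \<gamma> \<gamma>'"
    and s: "s > 0" and e: "e = 1 \<or> e = -1"
    and W: "\<And>t. t \<in> {u..v} \<Longrightarrow> a + e * s * (t - u) = \<gamma> t + e * W t \<and> 0 \<le> W t \<and> W t \<le> d"
  shows "integral {u..v} (\<lambda>t. theta \<rho> (h t) (curve_pt Q (a + e * s * (t - u))))
          \<le> integral {u..v} (\<lambda>t. theta \<rho> (h t) (curve_pt Q (\<gamma> t))) + k * d / s"
  using pc p W
proof (induction k arbitrary: v)
  case 0
  then have "u = v" by (simp add: stationary_pieces_def)
  then show ?case by simp
next
  case (Suc k)
  note S = stationary_pieces_Suc[OF Suc.prems(1)]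
  let ?c = "b k"
  let ?l = "\<lambda>t. a + e * s * (t - u)"
  let ?I = "\<lambda>x y f. integral {x..y} (\<lambda>t. theta \<rho> (h t) (curve_pt Q (f t)))"
  obtain w where w: "\<And>t. t \<in> {?c<..<v} \<Longrightarrow> h t = w" using S(4) by auto
  have IH: "?I u ?c ?l \<le> ?I u ?c \<gamma> + k * d / s"
    using Suc.IH[OF S(1) speed_bounded_deriv_subinterval[OF Suc.prems(2)]] Suc.prems(3) S by auto
  have shift: "?l t = ?l ?c + e * s * (t - ?c)" for t by (simp add: algebra_simps)
  have "?I ?c v (\<lambda>t. ?l ?c + e * s * (t - ?c)) \<le> ?I ?c v \<gamma> + d / s"
    using Suc.prems(3)[of ?c] Suc.prems(3)[of v] S shift[of v]
    by (intro straight_piece_cost_le[OF S(3) w speed_bounded_deriv_subinterval[OF Suc.prems(2)] s e]) auto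
  then have last: "?I ?c v ?l \<le> ?I ?c v \<gamma> + d / s"
    by (simp only: shift[symmetric])
  have "?I u v ?l = ?I u ?c ?l + ?I ?c v ?l"
    using stationary_pieces_integrable[OF Suc.prems(1), of ?l]
    by (intro Henstock_Kurzweil_Integration.integral_combine[symmetric] S) (simp add: continuous_intros)
  moreover have "?I u v \<gamma> = ?I u ?c \<gamma> + ?I ?c v \<gamma>"
    using stationary_pieces_integrable[OF Suc.prems(1) speed_bounded_deriv_continuous_on[OF Suc.prems(2)]]
    by (intro Henstock_Kurzweil_Integration.integral_combine[symmetric] S)
  ultimately show ?case using IH last by (simp add: add_divide_distrib algebra_simps)
qed

section \<open>Bending the end of a dog path\<close>

lemma has_field_derivative_within_Un:
  assumes "(f has_field_derivative D) (at x within S)" "(f has_field_derivative D) (at x within T)"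
  shows "(f has_field_derivative D) (at x within S \<union> T)"
proof -
  have "((\<lambda>y. (f y - f x) / (y - x)) \<longlongrightarrow> D) (at x within S \<union> T)"
    using assms unfolding has_field_derivative_iff at_within_union by (rule filterlim_sup)
  then show ?thesis by (simp add: has_field_derivative_iff)
qed

lemma has_real_derivative_split:
  fixes f :: "real \<Rightarrow> real"
  assumes "(f has_real_derivative D) (at x within {..x})" "(f has_real_derivative D) (at x within {x..})"
  shows "(f has_real_derivative D) (at x)"
proof -
  have "{..x} \<union> {x..} = UNIV" by auto
  then show ?thesis using has_field_derivative_within_Un[OF assms] by simp
qed

definition smoothstep :: "real \<Rightarrow> real" where
  "smoothstep x = (if x \<le> 0 then 0 else if x \<le> 1 then 3 * x^2 - 2 * x^3 else 1)"

definition smoothstep_deriv :: "real \<Rightarrow> real" where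
  "smoothstep_deriv x = (if x \<le> 0 then 0 else if x \<le> 1 then 6 * x - 6 * x^2 else 0)"

lemma smoothstep_simps: "x \<le> 0 \<Longrightarrow> smoothstep x = 0" "1 \<le> x \<Longrightarrow> smoothstep x = 1"
  "x \<le> 0 \<Longrightarrow> smoothstep_deriv x = 0" "1 \<le> x \<Longrightarrow> smoothstep_deriv x = 0"
  by (auto simp: smoothstep_def smoothstep_deriv_def)

lemma smoothstep_bounds: "0 \<le> smoothstep x" "smoothstep x \<le> 1" "0 \<le> smoothstep_deriv x"
proof -
  show "0 \<le> smoothstep x"
  proof (cases "0 < x \<and> x \<le> 1")
    case True
    then have "0 \<le> x^2 * (3 - 2 * x)" by (intro mult_nonneg_nonneg) auto
    then show ?thesis using True by (simp add: smoothstep_def algebra_simps power2_eq_square power3_eq_cube)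
  qed (auto simp: smoothstep_def)
  show "smoothstep x \<le> 1"
  proof (cases "0 < x \<and> x \<le> 1")
    case True
    then have "0 \<le> (1 - x)^2 * (1 + 2 * x)" by (intro mult_nonneg_nonneg) auto
    then show ?thesis using True by (simp add: smoothstep_def algebra_simps power2_eq_square power3_eq_cube)
  qed (auto simp: smoothstep_def)
  show "0 \<le> smoothstep_deriv x"
  proof (cases "0 < x \<and> x \<le> 1")
    case True
    then have "0 \<le> 6 * x * (1 - x)" by (intro mult_nonneg_nonneg) auto
    then show ?thesis using True by (simp add: smoothstep_deriv_def algebra_simps power2_eq_square)
  qed (auto simp: smoothstep_deriv_def)
qed

lemma smoothstep_cubic_deriv: "((\<lambda>x::real. 3 * x^2 - 2 * x^3) has_real_derivative (6 * x - 6 * x^2)) (at x within S)"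
  by (auto intro!: derivative_eq_intros simp: power2_eq_square)

lemma has_real_derivative_smoothstep: "(smoothstep has_real_derivative smoothstep_deriv x) (at x)"
proof -
  consider "x < 0" | "x = 0" | "0 < x \<and> x < 1" | "x = 1" | "1 < x" by linarith
  then show ?thesis
  proof cases
    case 1
    then have dx: "smoothstep_deriv x = 0" by (simp add: smoothstep_deriv_def)
    have "((\<lambda>_. 0) has_real_derivative 0) (at x)" by simp
    then have "(smoothstep has_real_derivative 0) (at x)"
      by (rule has_field_derivative_transform_within_open[where S="{..<0}"]) (use 1 in \<open>auto simp: smoothstep_def\<close>)
    then show ?thesis using dx by simp
  next
    case 2
    then have dx: "smoothstep_deriv x = 0" by (simp add: smoothstep_deriv_def)
    have "(smoothstep has_real_derivative 0) (at x)"
    proof (rule has_real_derivative_split)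
      have "((\<lambda>_. 0) has_real_derivative 0) (at x within {..x})" by simp
      then show "(smoothstep has_real_derivative 0) (at x within {..x})"
        by (rule has_field_derivative_transform_within[where d=1]) (use 2 in \<open>auto simp: smoothstep_def\<close>)
      have "((\<lambda>x::real. 3 * x^2 - 2 * x^3) has_real_derivative (6 * x - 6 * x^2)) (at x within {x..})"
        by (rule smoothstep_cubic_deriv)
      then have "((\<lambda>x::real. 3 * x^2 - 2 * x^3) has_real_derivative 0) (at x within {x..})"
        using 2 by simp
      then show "(smoothstep has_real_derivative 0) (at x within {x..})"
        by (rule has_field_derivative_transform_within[where d=1]) (use 2 in \<open>auto simp: smoothstep_def dist_real_def\<close>)
    qed
    then show ?thesis using dx by simp
  next
    case 3
    then have dx: "smoothstep_deriv x = 6 * x - 6 * x^2" by (simp add: smoothstep_deriv_def)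
    have "((\<lambda>x::real. 3 * x^2 - 2 * x^3) has_real_derivative (6 * x - 6 * x^2)) (at x)"
      by (rule smoothstep_cubic_deriv)
    then have "(smoothstep has_real_derivative (6 * x - 6 * x^2)) (at x)"
      by (rule has_field_derivative_transform_within_open[where S="{0<..<1}"]) (use 3 in \<open>auto simp: smoothstep_def\<close>)
    then show ?thesis using dx by simp
  next
    case 4
    then have dx: "smoothstep_deriv x = 0" by (simp add: smoothstep_deriv_def)
    have "(smoothstep has_real_derivative 0) (at x)"
    proof (rule has_real_derivative_split)
      have "((\<lambda>x::real. 3 * x^2 - 2 * x^3) has_real_derivative (6 * x - 6 * x^2)) (at x within {..x})"
        by (rule smoothstep_cubic_deriv)
      then have "((\<lambda>x::real. 3 * x^2 - 2 * x^3) has_real_derivative 0) (at x within {..x})"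
        using 4 by simp
      then show "(smoothstep has_real_derivative 0) (at x within {..x})"
        by (rule has_field_derivative_transform_within[where d=1]) (use 4 in \<open>auto simp: smoothstep_def dist_real_def\<close>)
      have "((\<lambda>_. 1) has_real_derivative 0) (at x within {x..})" by simp
      then show "(smoothstep has_real_derivative 0) (at x within {x..})"
        by (rule has_field_derivative_transform_within[where d=1]) (use 4 in \<open>auto simp: smoothstep_def\<close>)
    qed
    then show ?thesis using dx by simp
  next
    case 5
    then have dx: "smoothstep_deriv x = 0" by (simp add: smoothstep_deriv_def)
    have "((\<lambda>_. 1) has_real_derivative 0) (at x)" by simp
    then have "(smoothstep has_real_derivative 0) (at x)"
      by (rule has_field_derivative_transform_within_open[where S="{1<..}"]) (use 5 in \<open>auto simp: smoothstep_def\<close>)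
    then show ?thesis using dx by simp
  qed
qed

lemma continuous_on_smoothstep_deriv: "continuous_on UNIV smoothstep_deriv"
proof -
  have "continuous_on UNIV (\<lambda>x. if x \<le> 0 then 0 else (if x \<le> 1 then 6 * x - 6 * x^2 else (0::real)))"
  proof (rule continuous_on_cases_le[where h="\<lambda>x. x" and a=0])
    show "continuous_on {x \<in> UNIV. (x::real) \<le> 0} (\<lambda>x. 0::real)" by simp
    show "continuous_on {x \<in> UNIV. 0 \<le> (x::real)} (\<lambda>x. if x \<le> 1 then 6 * x - 6 * x^2 else (0::real))"
    proof (rule continuous_on_cases_le[where h="\<lambda>x. x" and a=1])
    qed (auto intro!: continuous_intros)
  qed (auto intro!: continuous_intros)
  then show ?thesis by (simp add: smoothstep_deriv_def[abs_def])
qed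

lemma continuous_on_smoothstep: "continuous_on UNIV smoothstep"
  using has_real_derivative_smoothstep by (intro DERIV_continuous_on) (auto intro: DERIV_subset)
lemma has_real_derivative_within_closed_outside:
  fixes f :: "real \<Rightarrow> real"
  assumes "closed S" "t \<notin> S"
  shows "(f has_real_derivative D) (at t within S)"
proof -
  have "\<not> t islimpt S" using assms closed_limpt by blast
  then have "at t within S = bot" using trivial_limit_within by blast
  then show ?thesis by simp
qed

lemma nondecreasing_of_deriv_nonneg_within:
  fixes f :: "real \<Rightarrow> real"
  assumes der: "\<And>t. t \<in> {A..B} \<Longrightarrow> (f has_real_derivative f' t) (at t within {A..B})"
    and nonneg: "\<And>t. t \<in> {A..B} \<Longrightarrow> 0 \<le> f' t"
    and xy: "A \<le> x" "x \<le> y" "y \<le> B"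
  shows "f x \<le> f y"
proof (rule DERIV_nonneg_imp_increasing_open[OF xy(2)])
  fix z assume z: "x < z" "z < y"
  then have "(f has_real_derivative f' z) (at z)"
    using der[of z] xy at_within_Icc_at[of A z B] by simp
  then show "\<exists>y. (f has_real_derivative y) (at z) \<and> 0 \<le> y"
    using nonneg[of z] z xy by auto
next
  have "continuous_on {A..B} f" using der by (rule DERIV_continuous_on)
  then show "continuous_on {x..y} f" by (rule continuous_on_subset) (use xy in auto)
qed

lemma has_real_derivative_smoothstep_rescaled:
  assumes "\<delta> \<noteq> 0"
  shows "((\<lambda>t. smoothstep ((t - \<tau>) / \<delta> + 1)) has_real_derivative smoothstep_deriv ((t - \<tau>) / \<delta> + 1) / \<delta>) (at t)"
proof -
  have "((\<lambda>t. (t - \<tau>) / \<delta> + 1) has_real_derivative 1 / \<delta>) (at t)"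
    using assms by (auto intro!: derivative_eq_intros)
  from DERIV_chain2[OF has_real_derivative_smoothstep this] show ?thesis by simp
qed

lemma smoothstep_rescaled_simps:
  assumes "0 < \<delta>"
  shows "t \<le> \<tau> - \<delta> \<Longrightarrow> smoothstep ((t - \<tau>) / \<delta> + 1) = 0"
    and "t \<le> \<tau> - \<delta> \<Longrightarrow> smoothstep_deriv ((t - \<tau>) / \<delta> + 1) = 0"
    and "\<tau> \<le> t \<Longrightarrow> smoothstep ((t - \<tau>) / \<delta> + 1) = 1"
    and "\<tau> \<le> t \<Longrightarrow> smoothstep_deriv ((t - \<tau>) / \<delta> + 1) = 0"
  using assms by (auto simp: smoothstep_simps divide_simps)

text \<open>With the smooth step \<open>\<psi>(t) = smoothstep ((t - \<tau>) / \<delta> + 1)\<close>, which rises from 0 to 1 on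
  \<open>[\<tau> - \<delta>, \<tau>]\<close>, the profile is \<open>\<psi> g - \<integral>\<psi>' g\<close>, whose derivative is \<open>\<psi> g'\<close>: it vanishes up to
  \<open>\<tau> - \<delta>\<close> and grows exactly like \<open>g\<close> from \<open>\<tau>\<close> on.\<close>

definition catch_up :: "real \<Rightarrow> real \<Rightarrow> (real \<Rightarrow> real) \<Rightarrow> real \<Rightarrow> real \<Rightarrow> real" where
  "catch_up \<delta> A g \<tau> t = smoothstep ((t - \<tau>) / \<delta> + 1) * g t
     - integral {A..t} (\<lambda>u. smoothstep_deriv ((u - \<tau>) / \<delta> + 1) / \<delta> * g u)"

lemma has_real_derivative_catch_up:
  assumes \<delta>: "0 < \<delta>"
    and g: "\<And>t. t \<in> {A..B} \<Longrightarrow> (g has_real_derivative g' t) (at t within {A..B})"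
    and t: "t \<in> {A..B}"
  shows "(catch_up \<delta> A g \<tau> has_real_derivative smoothstep ((t - \<tau>) / \<delta> + 1) * g' t) (at t within {A..B})"
proof -
  have "continuous_on {A..B} g" using g by (rule DERIV_continuous_on)
  then have "continuous_on {A..B} (\<lambda>u. smoothstep_deriv ((u - \<tau>) / \<delta> + 1) / \<delta> * g u)"
    using \<delta> by (intro continuous_intros continuous_on_compose2[OF continuous_on_smoothstep_deriv]) auto
  from integral_has_real_derivative[OF this t]
  have "((\<lambda>x. integral {A..x} (\<lambda>u. smoothstep_deriv ((u - \<tau>) / \<delta> + 1) / \<delta> * g u))
      has_real_derivative smoothstep_deriv ((t - \<tau>) / \<delta> + 1) / \<delta> * g t) (at t within {A..B})" .
  moreover have "((\<lambda>t. smoothstep ((t - \<tau>) / \<delta> + 1) * g t) has_real_derivative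
      smoothstep ((t - \<tau>) / \<delta> + 1) * g' t + smoothstep_deriv ((t - \<tau>) / \<delta> + 1) / \<delta> * g t) (at t within {A..B})"
    using DERIV_mult'[OF has_field_derivative_at_within[OF has_real_derivative_smoothstep_rescaled] g[OF t]] \<delta>
    by simp
  ultimately show ?thesis unfolding catch_up_def[abs_def] by (auto dest: DERIV_diff)
qed

lemma catch_up_before:
  assumes "0 < \<delta>" "A \<le> t" "t \<le> \<tau> - \<delta>"
  shows "catch_up \<delta> A g \<tau> t = 0"
proof -
  have "integral {A..t} (\<lambda>u. smoothstep_deriv ((u - \<tau>) / \<delta> + 1) / \<delta> * g u) = integral {A..t} (\<lambda>u. 0)"
    using assms by (intro integral_cong) (auto simp: smoothstep_rescaled_simps)
  then show ?thesis using assms by (simp add: catch_up_def smoothstep_rescaled_simps)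
qed

lemma catch_up_after:
  assumes \<delta>: "0 < \<delta>" and t: "A \<le> \<tau>" "\<tau> \<le> t" and g: "continuous_on {A..t} g"
  shows "catch_up \<delta> A g \<tau> t = catch_up \<delta> A g \<tau> \<tau> + g t - g \<tau>"
proof -
  let ?f = "\<lambda>u. smoothstep_deriv ((u - \<tau>) / \<delta> + 1) / \<delta> * g u"
  have "?f integrable_on {A..t}"
    using \<delta> by (intro integrable_continuous_real continuous_intros g
        continuous_on_compose2[OF continuous_on_smoothstep_deriv]) auto
  then have "integral {A..t} ?f = integral {A..\<tau>} ?f + integral {\<tau>..t} ?f"
    by (rule Henstock_Kurzweil_Integration.integral_combine[OF t, symmetric])
  also have "integral {\<tau>..t} ?f = integral {\<tau>..t} (\<lambda>u. 0)"
    using \<delta> by (intro integral_cong) (auto simp: smoothstep_rescaled_simps)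
  finally show ?thesis using \<delta> t by (simp add: catch_up_def smoothstep_rescaled_simps smoothstep_simps)
qed

lemma exists_catch_up_time:
  fixes g g' :: "real \<Rightarrow> real"
  assumes AB: "A \<le> B"
    and g: "\<And>t. t \<in> {A..B} \<Longrightarrow> (g has_real_derivative g' t) (at t within {A..B})"
    and g'_nonneg: "\<And>t. t \<in> {A..B} \<Longrightarrow> 0 \<le> g' t"
    and gA: "g A = 0" and d: "0 < d" "d \<le> g B" and \<delta>: "0 < \<delta>"
  obtains \<delta>0 \<tau> where "0 < \<delta>0" "\<delta>0 \<le> \<delta>" "A \<le> \<tau>" "\<tau> + \<delta>0 \<le> B" "catch_up \<delta>0 A g \<tau> B = d"
proof -
  have gcont: "continuous_on {A..B} g" using g by (rule DERIV_continuous_on)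
  have gmono: "g x \<le> g y" if "A \<le> x" "x \<le> y" "y \<le> B" for x y
    using nondecreasing_of_deriv_nonneg_within[OF g g'_nonneg that] .
  have "A \<noteq> B" using gA d by auto
  then have AltB: "A < B" using AB by simp
  obtain \<eta> where \<eta>: "\<eta> > 0" "\<And>t. t \<in> {A..B} \<Longrightarrow> dist t B < \<eta> \<Longrightarrow> dist (g t) (g B) < d"
    using gcont d AB unfolding continuous_on_iff by (metis atLeastAtMost_iff order_refl)
  define \<delta>0 where "\<delta>0 = min \<delta> (min ((B - A) / 2) (\<eta> / 3))"
  have "\<delta>0 \<le> \<delta>" "\<delta>0 \<le> (B - A) / 2" "\<delta>0 \<le> \<eta> / 3"
    unfolding \<delta>0_def by (meson min.cobounded1 min.cobounded2 order_trans)+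
  moreover have "0 < \<delta>0" using \<delta> AltB \<eta>(1) unfolding \<delta>0_def by auto
  ultimately have \<delta>0: "0 < \<delta>0" "\<delta>0 \<le> \<delta>" "2 * \<delta>0 \<le> B - A" "2 * \<delta>0 < \<eta>"
    using \<eta>(1) by auto
  have gclose: "g B - g (B - 2 * \<delta>0) < d"
    using \<eta>(2)[of "B - 2 * \<delta>0"] \<delta>0 by (auto simp: dist_real_def)
  let ?\<psi>' = "\<lambda>\<tau> u. smoothstep_deriv ((u - \<tau>) / \<delta>0 + 1) / \<delta>0"
  define \<Phi> where "\<Phi> \<tau> = catch_up \<delta>0 A g \<tau> B" for \<tau>
  have "continuous_on {A..B - \<delta>0} (\<lambda>\<tau>. smoothstep ((B - \<tau>) / \<delta>0 + 1) * g B)"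
    by (intro continuous_intros continuous_on_compose2[OF continuous_on_smoothstep]) (use \<delta>0 in auto)
  moreover have "continuous_on {A..B - \<delta>0} (\<lambda>\<tau>. integral (cbox A B) (\<lambda>u. ?\<psi>' \<tau> u * g u))"
  proof (rule integral_continuous_on_param)
    have "continuous_on ({A..B - \<delta>0} \<times> cbox A B)
        (\<lambda>x. smoothstep_deriv ((snd x - fst x) / \<delta>0 + 1) / \<delta>0 * g (snd x))"
      by (intro continuous_intros continuous_on_compose2[OF continuous_on_smoothstep_deriv]
          continuous_on_compose2[OF gcont]) (use \<delta>0 in auto)
    then show "continuous_on ({A..B - \<delta>0} \<times> cbox A B) (\<lambda>(\<tau>, u). ?\<psi>' \<tau> u * g u)"
      by (simp add: split_def)
  qed
  ultimately have \<Phi>_cont: "continuous_on {A..B - \<delta>0} \<Phi>"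
    unfolding \<Phi>_def catch_up_def by (auto intro: continuous_on_diff)
  have "\<Phi> A = catch_up \<delta>0 A g A A + g B - g A"
    unfolding \<Phi>_def using \<delta>0 AB continuous_on_subset[OF gcont] by (intro catch_up_after) auto
  then have \<Phi>_A: "d \<le> \<Phi> A" using gA d by (simp add: catch_up_def)
  have \<Phi>_end: "\<Phi> (B - \<delta>0) < d"
  proof -
    let ?\<tau> = "B - \<delta>0"
    have "(?\<psi>' ?\<tau> has_integral (smoothstep ((B - ?\<tau>) / \<delta>0 + 1) - smoothstep ((A - ?\<tau>) / \<delta>0 + 1))) {A..B}"
    proof (rule fundamental_theorem_of_calculus[OF AB])
      fix x assume "x \<in> {A..B}"
      show "((\<lambda>t. smoothstep ((t - ?\<tau>) / \<delta>0 + 1)) has_vector_derivative ?\<psi>' ?\<tau> x) (at x within {A..B})"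
        using has_real_derivative_smoothstep_rescaled[of \<delta>0 ?\<tau> x] \<delta>0
        by (simp add: has_real_derivative_iff_has_vector_derivative[symmetric] has_field_derivative_at_within)
    qed
    moreover have "smoothstep ((B - ?\<tau>) / \<delta>0 + 1) = 1" "smoothstep ((A - ?\<tau>) / \<delta>0 + 1) = 0"
      using \<delta>0 by (simp_all add: smoothstep_rescaled_simps smoothstep_simps)
    ultimately have "(?\<psi>' ?\<tau> has_integral 1) {A..B}" by simp
    then have lower: "((\<lambda>u. ?\<psi>' ?\<tau> u * g (B - 2 * \<delta>0)) has_integral 1 * g (B - 2 * \<delta>0)) {A..B}"
      by (rule has_integral_mult_left)
    have int: "(\<lambda>u. ?\<psi>' ?\<tau> u * g u) integrable_on {A..B}"
      by (intro integrable_continuous_real continuous_intros gcont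
          continuous_on_compose2[OF continuous_on_smoothstep_deriv]) (use \<delta>0 in auto)
    have le: "?\<psi>' ?\<tau> u * g (B - 2 * \<delta>0) \<le> ?\<psi>' ?\<tau> u * g u" if "u \<in> {A..B}" for u
    proof (cases "u \<le> B - 2 * \<delta>0")
      case True
      then show ?thesis using \<delta>0 by (simp add: smoothstep_rescaled_simps)
    next
      case False
      then have "g (B - 2 * \<delta>0) \<le> g u" using that \<delta>0 by (intro gmono) auto
      moreover have "0 \<le> ?\<psi>' ?\<tau> u" using \<delta>0 smoothstep_bounds(3) by simp
      ultimately show ?thesis by (rule mult_left_mono)
    qed
    have "g (B - 2 * \<delta>0) \<le> integral {A..B} (\<lambda>u. ?\<psi>' ?\<tau> u * g u)"
      using has_integral_le[OF lower integrable_integral[OF int] le] by simp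
    then show ?thesis using gclose \<delta>0 unfolding \<Phi>_def catch_up_def by (simp add: smoothstep_simps)
  qed
  obtain \<tau> where "A \<le> \<tau>" "\<tau> \<le> B - \<delta>0" "\<Phi> \<tau> = d"
    using IVT2'[of \<Phi> "B - \<delta>0" d A] \<Phi>_A \<Phi>_end \<Phi>_cont \<delta>0 by auto
  then show ?thesis using that[of \<delta>0 \<tau>] \<delta>0 unfolding \<Phi>_def by auto
qed

lemma abs_convex_toward_le:
  fixes p x s e :: real
  assumes p: "0 \<le> p" "p \<le> 1" and x: "\<bar>x\<bar> \<le> s" and e: "e = 1 \<or> e = -1"
  shows "\<bar>x + e * (p * (s - e * x))\<bar> \<le> s"
proof -
  have "x + e * (p * (s - e * x)) = (1 - p) * x + p * (e * s)"
    using e by (auto simp: algebra_simps)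
  also have "\<bar>\<dots>\<bar> \<le> (1 - p) * \<bar>x\<bar> + p * \<bar>e * s\<bar>"
    using p by (metis abs_mult abs_of_nonneg abs_triangle_ineq diff_ge_0_iff_ge)
  also have "\<dots> \<le> (1 - p) * s + p * s"
    using p x e by (intro add_mono mult_left_mono) auto
  finally show ?thesis by (simp add: algebra_simps)
qed

lemma detour_cost_le:
  fixes h :: "real \<Rightarrow> 'a::real_normed_vector"
  assumes pc: "stationary_pieces k b h A B" and p: "speed_bounded_deriv s A B \<gamma> \<gamma>'"
    and cont: "continuous_on {A..B} \<gamma>2"
    and t: "A \<le> t0" "t0 \<le> \<tau>" "\<tau> \<le> B" "\<tau> - t0 \<le> \<delta>"
    and agree: "\<And>t. t \<in> {A..t0} \<Longrightarrow> \<gamma>2 t = \<gamma> t"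
    and s: "0 < s" and e: "e = 1 \<or> e = -1"
    and tail: "\<And>t. t \<in> {\<tau>..B} \<Longrightarrow>
      \<gamma>2 t = \<gamma>2 \<tau> + e * s * (t - \<tau>) \<and> \<gamma>2 t = \<gamma> t + e * W t \<and> 0 \<le> W t \<and> W t \<le> d"
  shows "integral {A..B} (\<lambda>t. theta \<rho> (h t) (curve_pt Q (\<gamma>2 t)))
      \<le> integral {A..B} (\<lambda>t. theta \<rho> (h t) (curve_pt Q (\<gamma> t))) + \<delta> + k * d / s"
proof -
  let ?I = "\<lambda>x y f. integral {x..y} (\<lambda>t. theta \<rho> (h t) (curve_pt Q (f t)))"
  have int: "(\<lambda>t. theta \<rho> (h t) (curve_pt Q (f t))) integrable_on {x..y}"
    if "continuous_on {A..B} f" "A \<le> x" "y \<le> B" for f x y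
    by (rule integrable_on_subinterval[OF stationary_pieces_integrable[OF pc that(1)]]) (use that in auto)
  have split: "?I A B f = ?I A t0 f + ?I t0 \<tau> f + ?I \<tau> B f" if "continuous_on {A..B} f" for f
  proof -
    have "?I t0 \<tau> f + ?I \<tau> B f = ?I t0 B f"
      using t by (intro Henstock_Kurzweil_Integration.integral_combine int[OF that]) auto
    moreover have "?I A t0 f + ?I t0 B f = ?I A B f"
      using t by (intro Henstock_Kurzweil_Integration.integral_combine int[OF that]) auto
    ultimately show ?thesis by simp
  qed
  have "?I A t0 \<gamma>2 = ?I A t0 \<gamma>"
    using agree by (intro integral_cong) simp
  moreover have "?I t0 \<tau> \<gamma>2 \<le> \<delta>"
  proof -
    have "?I t0 \<tau> \<gamma>2 \<le> integral {t0..\<tau>} (\<lambda>t. 1::real)"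
      using int[OF cont, of t0 \<tau>] t by (intro integral_le) (auto simp: theta_bounds)
    then show ?thesis using t by simp
  qed
  moreover have "0 \<le> ?I t0 \<tau> \<gamma>"
    using int[OF speed_bounded_deriv_continuous_on[OF p], of t0 \<tau>] t
    by (intro integral_nonneg) (auto simp: theta_bounds)
  moreover have "?I \<tau> B \<gamma>2 \<le> ?I \<tau> B \<gamma> + k * d / s"
  proof -
    have tail': "\<gamma>2 \<tau> + e * s * (x - \<tau>) = \<gamma> x + e * W x \<and> 0 \<le> W x \<and> W x \<le> d"
      and tail_eq: "\<gamma>2 x = \<gamma>2 \<tau> + e * s * (x - \<tau>)" if "x \<in> {\<tau>..B}" for x
      using tail[OF that] by auto
    have "stationary_pieces k (\<lambda>j. max \<tau> (min B (b j))) h \<tau> B"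
      by (rule stationary_pieces_clip[OF pc]) (use t in auto)
    moreover have "speed_bounded_deriv s \<tau> B \<gamma> \<gamma>'"
      by (rule speed_bounded_deriv_subinterval[OF p]) (use t in auto)
    ultimately have "?I \<tau> B (\<lambda>t. \<gamma>2 \<tau> + e * s * (t - \<tau>)) \<le> ?I \<tau> B \<gamma> + k * d / s"
      using tail' by (rule straight_tail_cost_le[OF _ _ s e])
    moreover have "?I \<tau> B (\<lambda>t. \<gamma>2 \<tau> + e * s * (t - \<tau>)) = ?I \<tau> B \<gamma>2"
    proof (rule integral_cong)
      fix x assume "x \<in> {\<tau>..B}"
      then show "theta \<rho> (h x) (curve_pt Q (\<gamma>2 \<tau> + e * s * (x - \<tau>))) = theta \<rho> (h x) (curve_pt Q (\<gamma>2 x))"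
        by (simp only: tail_eq)
    qed
    ultimately show ?thesis by simp
  qed
  ultimately show ?thesis
    using split[OF cont] split[OF speed_bounded_deriv_continuous_on[OF p]] by linarith
qed

text \<open>The profile by which the end of \<open>\<gamma>\<close> is moved: a catch-up profile of
  \<open>g t = s (t - A) - e (\<gamma> t - \<gamma> A)\<close>, the lead a full-speed dog running in direction \<open>e\<close> would gain
  over \<open>\<gamma>\<close>.\<close>

lemma lead_catch_up:
  fixes \<gamma> \<gamma>' :: "real \<Rightarrow> real"
  assumes AB: "A \<le> B" and p: "speed_bounded_deriv s A B \<gamma> \<gamma>'"
    and e: "e = 1 \<or> e = -1" and d: "0 < d"
    and feas: "e * (\<gamma> B + e * d - \<gamma> A) \<le> s * (B - A)" and \<delta>: "0 < \<delta>"
  obtains W \<theta> \<delta>0 \<tau> where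
    "\<And>t. t \<in> {A..B} \<Longrightarrow> (W has_real_derivative \<theta> t * (s - e * \<gamma>' t)) (at t within {A..B})"
    "\<And>t. 0 \<le> \<theta> t \<and> \<theta> t \<le> 1" "\<theta> B = 1"
    "W A = 0" "W B = d" "\<And>t. t \<in> {A..B} \<Longrightarrow> 0 \<le> W t \<and> W t \<le> d"
    "0 < \<delta>0" "\<delta>0 \<le> \<delta>" "A \<le> \<tau>" "\<tau> + \<delta>0 \<le> B"
    "\<And>t. A \<le> t \<Longrightarrow> t \<le> \<tau> - \<delta>0 \<Longrightarrow> W t = 0"
    "\<And>t. \<tau> \<le> t \<Longrightarrow> t \<le> B \<Longrightarrow> \<gamma> t + e * W t = \<gamma> \<tau> + e * W \<tau> + e * s * (t - \<tau>)"
proof -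
  have ee: "e * e = 1" using e by auto
  define g where "g t = s * (t - A) - e * (\<gamma> t - \<gamma> A)" for t
  have g_deriv: "(g has_real_derivative s - e * \<gamma>' t) (at t within {A..B})" if "t \<in> {A..B}" for t
    using p that unfolding g_def speed_bounded_deriv_def by (auto intro!: derivative_eq_intros)
  have g'_nonneg: "0 \<le> s - e * \<gamma>' t" if "t \<in> {A..B}" for t
  proof -
    have "\<bar>\<gamma>' t\<bar> \<le> s" using p that unfolding speed_bounded_deriv_def by auto
    then show ?thesis using e by (auto simp: abs_le_iff)
  qed
  have "e * (\<gamma> B + e * d - \<gamma> A) = e * (\<gamma> B - \<gamma> A) + d" using ee by (simp add: algebra_simps)
  then have gB: "d \<le> g B" using feas by (simp add: g_def)
  have gA: "g A = 0" by (simp add: g_def)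
  obtain \<delta>0 \<tau> where \<delta>0: "0 < \<delta>0" "\<delta>0 \<le> \<delta>" "A \<le> \<tau>" "\<tau> + \<delta>0 \<le> B"
    and catch_up_B: "catch_up \<delta>0 A g \<tau> B = d"
    by (rule exists_catch_up_time[OF AB g_deriv g'_nonneg gA d gB \<delta>])
  define W where "W = catch_up \<delta>0 A g \<tau>"
  define \<theta> where "\<theta> t = smoothstep ((t - \<tau>) / \<delta>0 + 1)" for t
  have W_deriv: "(W has_real_derivative \<theta> t * (s - e * \<gamma>' t)) (at t within {A..B})" if "t \<in> {A..B}" for t
    unfolding W_def \<theta>_def by (rule has_real_derivative_catch_up[OF \<delta>0(1) g_deriv that])
  have W'_nonneg: "0 \<le> \<theta> t * (s - e * \<gamma>' t)" if "t \<in> {A..B}" for t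
    using g'_nonneg[OF that] by (simp add: \<theta>_def smoothstep_bounds)
  have WA: "W A = 0" by (simp add: W_def catch_up_def g_def)
  have WB: "W B = d" using catch_up_B by (simp add: W_def)
  have W_bounds: "0 \<le> W t \<and> W t \<le> d" if "t \<in> {A..B}" for t
    using nondecreasing_of_deriv_nonneg_within[OF W_deriv W'_nonneg, of A t]
      nondecreasing_of_deriv_nonneg_within[OF W_deriv W'_nonneg, of t B] that WA WB by auto
  have W_before: "W t = 0" if "A \<le> t" "t \<le> \<tau> - \<delta>0" for t
    unfolding W_def using \<delta>0(1) that by (rule catch_up_before)
  have W_after: "W t = W \<tau> + g t - g \<tau>" if "\<tau> \<le> t" "t \<le> B" for t
    unfolding W_def using \<delta>0 that continuous_on_subset[OF DERIV_continuous_on[OF g_deriv]]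
    by (intro catch_up_after) auto
  have straight: "\<gamma> t + e * W t = \<gamma> \<tau> + e * W \<tau> + e * s * (t - \<tau>)" if "\<tau> \<le> t" "t \<le> B" for t
  proof -
    have "\<gamma> t + e * W t = \<gamma> t + e * (W \<tau> + g t - g \<tau>)" using W_after[OF that] by simp
    also have "\<dots> = \<gamma> \<tau> + e * W \<tau> + e * s * (t - \<tau>) + (1 - e * e) * (\<gamma> t - \<gamma> \<tau>)"
      by (simp add: g_def algebra_simps)
    finally show ?thesis using ee by simp
  qed
  have \<theta>B: "\<theta> B = 1" using \<delta>0 by (simp add: \<theta>_def smoothstep_rescaled_simps)
  have \<theta>: "0 \<le> \<theta> t \<and> \<theta> t \<le> 1" for t by (simp add: \<theta>_def smoothstep_bounds)
  show ?thesis by (rule that[OF W_deriv \<theta> \<theta>B WA WB W_bounds \<delta>0 W_before straight])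
qed

lemma shift_path_end:
  fixes \<gamma> \<gamma>' :: "real \<Rightarrow> real" and h :: "real \<Rightarrow> 'a::real_normed_vector"
  assumes AB: "A \<le> B" and s: "0 < s" and p: "speed_bounded_deriv s A B \<gamma> \<gamma>'"
    and rng: "\<gamma> ` {A..B} \<subseteq> {0..L}"
    and e: "e = 1 \<or> e = -1" and d: "0 < d"
    and target: "\<gamma> B + e * d \<in> {0..L}"
    and feas: "e * (\<gamma> B + e * d - \<gamma> A) \<le> s * (B - A)"
    and \<delta>: "0 < \<delta>" and pc: "stationary_pieces k b h A B"
  obtains \<gamma>2 \<gamma>2' where "speed_bounded_deriv s A B \<gamma>2 \<gamma>2'" "\<gamma>2 ` {A..B} \<subseteq> {0..L}"
    "\<gamma>2 A = \<gamma> A" "\<gamma>2 B = \<gamma> B + e * d" "\<gamma>2' B = e * s"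
    "integral {A..B} (\<lambda>t. theta \<rho> (h t) (curve_pt Q (\<gamma>2 t)))
       \<le> integral {A..B} (\<lambda>t. theta \<rho> (h t) (curve_pt Q (\<gamma> t))) + \<delta> + k * d / s"
proof -
  have ee: "e * e = 1" using e by auto
  obtain W \<theta> \<delta>0 \<tau> where W_deriv:
      "\<And>t. t \<in> {A..B} \<Longrightarrow> (W has_real_derivative \<theta> t * (s - e * \<gamma>' t)) (at t within {A..B})"
    and \<theta>: "\<And>t. 0 \<le> \<theta> t \<and> \<theta> t \<le> 1" "\<theta> B = 1"
    and W: "W A = 0" "W B = d" "\<And>t. t \<in> {A..B} \<Longrightarrow> 0 \<le> W t \<and> W t \<le> d"
    and \<delta>0: "0 < \<delta>0" "\<delta>0 \<le> \<delta>" "A \<le> \<tau>" "\<tau> + \<delta>0 \<le> B"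
    and W_before: "\<And>t. A \<le> t \<Longrightarrow> t \<le> \<tau> - \<delta>0 \<Longrightarrow> W t = 0"
    and W_after: "\<And>t. \<tau> \<le> t \<Longrightarrow> t \<le> B \<Longrightarrow> \<gamma> t + e * W t = \<gamma> \<tau> + e * W \<tau> + e * s * (t - \<tau>)"
    using lead_catch_up[OF AB p e d feas \<delta>] by blast
  define \<gamma>2 where "\<gamma>2 t = \<gamma> t + e * W t" for t
  define \<gamma>2' where "\<gamma>2' t = \<gamma>' t + e * (\<theta> t * (s - e * \<gamma>' t))" for t
  have sb2: "speed_bounded_deriv s A B \<gamma>2 \<gamma>2'"
    unfolding speed_bounded_deriv_def
  proof
    fix t assume t: "t \<in> {A..B}"
    have d: "(\<gamma> has_real_derivative \<gamma>' t) (at t within {A..B})" and b: "\<bar>\<gamma>' t\<bar> \<le> s"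
      using p t unfolding speed_bounded_deriv_def by auto
    have "(\<gamma>2 has_real_derivative \<gamma>' t + e * (\<theta> t * (s - e * \<gamma>' t))) (at t within {A..B})"
      unfolding \<gamma>2_def by (intro DERIV_add DERIV_cmult d W_deriv[OF t])
    moreover have "\<bar>\<gamma>2' t\<bar> \<le> s"
      unfolding \<gamma>2'_def by (rule abs_convex_toward_le[OF _ _ b e]) (simp_all add: \<theta>(1))
    ultimately show "(\<gamma>2 has_real_derivative \<gamma>2' t) (at t within {A..B}) \<and> \<bar>\<gamma>2' t\<bar> \<le> s"
      by (simp add: \<gamma>2'_def)
  qed
  have straight: "\<gamma>2 t = \<gamma>2 \<tau> + e * s * (t - \<tau>)" if "\<tau> \<le> t" "t \<le> B" for t
    using W_after[OF that] by (simp add: \<gamma>2_def)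
  have ahead: "e * \<gamma>2 t = e * \<gamma>2 \<tau> + s * (t - \<tau>)" if "\<tau> \<le> t" "t \<le> B" for t
  proof -
    have "e * \<gamma>2 t = e * \<gamma>2 \<tau> + (e * e) * s * (t - \<tau>)"
      unfolding straight[OF that] by (simp add: algebra_simps)
    then show ?thesis using ee by simp
  qed
  have below_end: "e * \<gamma>2 t \<le> e * \<gamma>2 B" if t: "t \<in> {A..B}" "\<tau> - \<delta>0 \<le> t" for t
  proof (cases "\<tau> \<le> t")
    case True
    have "s * (t - \<tau>) \<le> s * (B - \<tau>)" using s t by (intro mult_left_mono) auto
    then show ?thesis using ahead[of t] ahead[of B] True t by simp
  next
    case False
    have "e * (\<gamma>2 t - \<gamma>2 \<tau>) \<le> \<bar>\<gamma>2 t - \<gamma>2 \<tau>\<bar>" using e by auto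
    also have "\<dots> \<le> s * (\<tau> - t)"
      using speed_bounded_deriv_lipschitz[OF sb2, of t \<tau>] t False \<delta>0 by auto
    also have "\<dots> \<le> s * (B - \<tau>)" using s t \<delta>0 by (intro mult_left_mono) auto
    finally show ?thesis using ahead[of B] \<delta>0 by (simp add: algebra_simps)
  qed
  have rng2: "\<gamma>2 ` {A..B} \<subseteq> {0..L}"
  proof (rule image_subsetI)
    fix t assume t: "t \<in> {A..B}"
    have \<gamma>t: "\<gamma> t \<in> {0..L}" using rng t by blast
    show "\<gamma>2 t \<in> {0..L}"
    proof (cases "\<tau> - \<delta>0 \<le> t")
      case True
      have "e * \<gamma> t \<le> e * \<gamma>2 t"
        using W(3)[OF t] e by (elim disjE) (simp_all add: \<gamma>2_def)
      moreover have "e * \<gamma>2 t \<le> e * (\<gamma> B + e * d)"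
        using below_end[OF t True] W(2) by (simp add: \<gamma>2_def)
      ultimately show ?thesis using \<gamma>t target e by (elim disjE) simp_all
    next
      case False
      then show ?thesis using W_before[of t] \<gamma>t t by (simp add: \<gamma>2_def)
    qed
  qed
  have cost: "integral {A..B} (\<lambda>t. theta \<rho> (h t) (curve_pt Q (\<gamma>2 t)))
      \<le> integral {A..B} (\<lambda>t. theta \<rho> (h t) (curve_pt Q (\<gamma> t))) + \<delta> + k * d / s"
  proof (rule detour_cost_le[OF pc p speed_bounded_deriv_continuous_on[OF sb2] _ _ _ _ _ s e])
    show "A \<le> max A (\<tau> - \<delta>0)" "max A (\<tau> - \<delta>0) \<le> \<tau>" "\<tau> \<le> B" "\<tau> - max A (\<tau> - \<delta>0) \<le> \<delta>"
      using \<delta>0 by linarith+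
    show "\<gamma>2 t = \<gamma> t" if "t \<in> {A..max A (\<tau> - \<delta>0)}" for t
    proof (cases "t \<le> \<tau> - \<delta>0")
      case True
      then show ?thesis using that W_before[of t] by (simp add: \<gamma>2_def)
    next
      case False
      then have "t = A" using that by auto
      then show ?thesis using W(1) by (simp add: \<gamma>2_def)
    qed
    show "\<gamma>2 t = \<gamma>2 \<tau> + e * s * (t - \<tau>) \<and> \<gamma>2 t = \<gamma> t + e * W t \<and> 0 \<le> W t \<and> W t \<le> d"
      if "t \<in> {\<tau>..B}" for t
    proof -
      have t: "\<tau> \<le> t" "t \<le> B" "t \<in> {A..B}" using that \<delta>0 by auto
      show ?thesis using straight[OF t(1,2)] W(3)[OF t(3)] by (simp add: \<gamma>2_def)
    qed
  qed
  have ends: "\<gamma>2 A = \<gamma> A" "\<gamma>2 B = \<gamma> B + e * d" using W(1,2) by (auto simp: \<gamma>2_def)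
  have slope: "\<gamma>2' B = e * s"
  proof -
    have "\<gamma>2' B = e * s + (1 - e * e) * \<gamma>' B" using \<theta>(2) by (simp add: \<gamma>2'_def algebra_simps)
    then show ?thesis using ee by simp
  qed
  show ?thesis by (rule that[OF sb2 rng2 ends slope cost])
qed

section \<open>Splicing dog paths\<close>

lemma speed_bounded_deriv_glue:
  assumes AM: "A \<le> M" and MB: "M \<le> B" and p: "speed_bounded_deriv s A M p p'" and q: "speed_bounded_deriv s M B q q'"
    and pq: "p M = q M" and pq': "p' M = q' M"
  shows "speed_bounded_deriv s A B (\<lambda>t. if t \<le> M then p t else q t) (\<lambda>t. if t \<le> M then p' t else q' t)"
  unfolding speed_bounded_deriv_def
proof
  fix t assume t: "t \<in> {A..B}"
  let ?r = "\<lambda>t. if t \<le> M then p t else q t"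
  let ?r' = "\<lambda>t. if t \<le> M then p' t else q' t"
  have d1: "(?r has_real_derivative ?r' t) (at t within {A..M})"
  proof (cases "t \<le> M")
    case True
    have "(p has_real_derivative p' t) (at t within {A..M})" using p t True unfolding speed_bounded_deriv_def by auto
    then have "(?r has_real_derivative p' t) (at t within {A..M})"
      by (rule has_field_derivative_transform_within[where d=1]) (use t True in auto)
    then show ?thesis using True by simp
  next
    case False
    then show ?thesis by (intro has_real_derivative_within_closed_outside) auto
  qed
  have d2: "(?r has_real_derivative ?r' t) (at t within {M..B})"
  proof (cases "M \<le> t")
    case True
    have "(q has_real_derivative q' t) (at t within {M..B})" using q t True unfolding speed_bounded_deriv_def by auto
    then have "(?r has_real_derivative q' t) (at t within {M..B})"
      by (rule has_field_derivative_transform_within[where d=1]) (use t True pq in auto)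
    moreover have "?r' t = q' t" using True pq' by auto
    ultimately show ?thesis by simp
  next
    case False
    then show ?thesis by (intro has_real_derivative_within_closed_outside) auto
  qed
  have "{A..B} = {A..M} \<union> {M..B}" using AM MB by auto
  then have "(?r has_real_derivative ?r' t) (at t within {A..B})" using has_field_derivative_within_Un[OF d1 d2] by simp
  moreover have "\<bar>?r' t\<bar> \<le> s" using p q t unfolding speed_bounded_deriv_def by auto
  ultimately show "(?r has_real_derivative ?r' t) (at t within {A..B}) \<and> \<bar>?r' t\<bar> \<le> s" by simp
qed

lemma speed_bounded_deriv_reflect:
  assumes q: "speed_bounded_deriv s M B q q'"
  shows "speed_bounded_deriv s M B (\<lambda>t. q (M + B - t)) (\<lambda>t. - q' (M + B - t))"
  unfolding speed_bounded_deriv_def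
proof
  fix t assume t: "t \<in> {M..B}"
  have im: "(\<lambda>t. M + B - t) ` {M..B} = {M..B}" by simp
  have "(q has_real_derivative q' (M + B - t)) (at (M + B - t) within {M..B})"
    using q t unfolding speed_bounded_deriv_def by auto
  then have dq: "(q has_real_derivative q' (M + B - t)) (at ((\<lambda>t. M + B - t) t) within (\<lambda>t. M + B - t) ` {M..B})"
    using im by simp
  have dr: "((\<lambda>t. M + B - t) has_real_derivative -1) (at t within {M..B})"
    by (auto intro!: derivative_eq_intros)
  have "((q \<circ> (\<lambda>t. M + B - t)) has_real_derivative q' (M + B - t) * -1) (at t within {M..B})"
    by (rule DERIV_image_chain[OF dq dr])
  then show "((\<lambda>t. q (M + B - t)) has_real_derivative - q' (M + B - t)) (at t within {M..B}) \<and> \<bar>- q' (M + B - t)\<bar> \<le> s"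
    using q t unfolding speed_bounded_deriv_def by (auto simp: o_def)
qed

lemma cost_reflect:
  fixes q :: "real \<Rightarrow> real" and h :: "real \<Rightarrow> 'a::real_normed_vector"
  assumes MB: "M \<le> B" and hw: "\<And>t. t \<in> {M<..<B} \<Longrightarrow> h t = w" and cq: "continuous_on {M..B} q"
  shows "integral {M..B} (\<lambda>t. theta \<rho> (h t) (curve_pt Q (q (M + B - t))))
       = integral {M..B} (\<lambda>t. theta \<rho> (h t) (curve_pt Q (q t)))"
proof -
  let ?r = "\<lambda>t::real. M + B - t"
  have cr: "continuous_on {M..B} (\<lambda>t. q (M + B - t))"
    by (rule continuous_on_compose2[OF cq]) (auto intro!: continuous_intros)
  let ?S = "{t\<in>{M..B}. q t \<in> far_positions \<rho> w Q}"
  let ?Sr = "{t\<in>{M..B}. q (M + B - t) \<in> far_positions \<rho> w Q}"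
  have S: "?S \<in> lmeasurable" using integral_theta_stationary(1)[OF MB hw cq] by simp
  have Sr: "?Sr \<in> lmeasurable" using integral_theta_stationary(1)[OF MB hw cr] by simp
  have e1: "?Sr = ?r ` ?S" and e2: "?S = ?r ` ?Sr"
    by (force intro: image_eqI[where x="M + B - t" for t])+
  have der: "(?r has_real_derivative -1) (at x within X)" for x X
    by (auto intro!: derivative_eq_intros)
  have m1: "measure lebesgue (?r ` ?S) \<le> 1 * measure lebesgue ?S"
    using measure_image_le_of_deriv_bound[OF S der, of 1] by auto
  have m2: "measure lebesgue (?r ` ?Sr) \<le> 1 * measure lebesgue ?Sr"
    using measure_image_le_of_deriv_bound[OF Sr der, of 1] by auto
  have "measure lebesgue ?Sr = measure lebesgue ?S" using m1 m2 e1 e2 by simp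
  then show ?thesis using integral_theta_stationary(3)[OF MB hw cq] integral_theta_stationary(3)[OF MB hw cr] by simp
qed

lemma speed_bounded_deriv_tight_linear:
  assumes p: "speed_bounded_deriv s a b \<gamma> \<gamma>'" and ab: "a \<le> b" and e: "e = 1 \<or> e = -1"
    and tight: "e * (\<gamma> b - \<gamma> a) = s * (b - a)"
    and t: "t \<in> {a..b}"
  shows "\<gamma> t = \<gamma> a + e * s * (t - a)"
proof -
  have l1: "\<bar>\<gamma> t - \<gamma> a\<bar> \<le> s * \<bar>t - a\<bar>" using speed_bounded_deriv_lipschitz[OF p t] ab by auto
  have l2: "\<bar>\<gamma> b - \<gamma> t\<bar> \<le> s * \<bar>b - t\<bar>" using speed_bounded_deriv_lipschitz[OF p _ t] ab by auto
  have "e * (\<gamma> t - \<gamma> a) \<le> s * (t - a)" using l1 t e by auto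
  moreover have "e * (\<gamma> b - \<gamma> t) \<le> s * (b - t)" using l2 t e by auto
  ultimately have "e * (\<gamma> t - \<gamma> a) = s * (t - a)" using tight by (simp add: algebra_simps)
  then show ?thesis using e by (elim disjE) (auto simp: algebra_simps)
qed

lemma cost_glue:
  fixes p q :: "real \<Rightarrow> real" and h :: "real \<Rightarrow> 'a::real_normed_vector"
  assumes AM: "A \<le> M" and MB: "M \<le> B" and hw: "\<And>t. t \<in> {A<..<B} \<Longrightarrow> h t = w"
    and r: "\<And>t. t \<in> {A..M} \<Longrightarrow> r t = p t" "\<And>t. t \<in> {M..B} \<Longrightarrow> r t = q t"
    and cr: "continuous_on {A..B} r"
  shows "integral {A..B} (\<lambda>t. theta \<rho> (h t) (curve_pt Q (r t)))
       = integral {A..M} (\<lambda>t. theta \<rho> (h t) (curve_pt Q (p t))) + integral {M..B} (\<lambda>t. theta \<rho> (h t) (curve_pt Q (q t)))"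
proof -
  have pc: "stationary_pieces 1 (\<lambda>j. if j = 0 then A else B) h A B" by (rule stationary_pieces_single[where w=w]) (use hw AM MB in auto)
  have i: "(\<lambda>t. theta \<rho> (h t) (curve_pt Q (r t))) integrable_on {A..B}" by (rule stationary_pieces_integrable[OF pc cr])
  have "integral {A..B} (\<lambda>t. theta \<rho> (h t) (curve_pt Q (r t)))
     = integral {A..M} (\<lambda>t. theta \<rho> (h t) (curve_pt Q (r t))) + integral {M..B} (\<lambda>t. theta \<rho> (h t) (curve_pt Q (r t)))"
    using Henstock_Kurzweil_Integration.integral_combine[OF AM MB i] by simp
  also have "integral {A..M} (\<lambda>t. theta \<rho> (h t) (curve_pt Q (r t))) = integral {A..M} (\<lambda>t. theta \<rho> (h t) (curve_pt Q (p t)))"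
    by (rule integral_cong) (use r in auto)
  also have "integral {M..B} (\<lambda>t. theta \<rho> (h t) (curve_pt Q (r t))) = integral {M..B} (\<lambda>t. theta \<rho> (h t) (curve_pt Q (q t)))"
    by (rule integral_cong) (use r in auto)
  finally show ?thesis .
qed

lemma bend_path_end:
  fixes p p' :: "real \<Rightarrow> real" and h :: "real \<Rightarrow> 'a::real_normed_vector"
  assumes AM: "A \<le> M" and s: "0 < s" and hw: "\<And>t. t \<in> {A<..<M} \<Longrightarrow> h t = w"
    and pp: "speed_bounded_deriv s A M p p'" and prng: "p ` {A..M} \<subseteq> {0..L}"
    and e: "e = 1 \<or> e = -1" and \<eta>: "0 < \<eta>" and \<delta>: "0 < \<delta>"
    and room: "p M + e * (2 * \<eta>) \<in> {0..L}"
    and slack: "e * (p M - p A) + 2 * \<eta> \<le> s * (M - A)"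
  obtains p2 p2' where "speed_bounded_deriv s A M p2 p2'" "p2 ` {A..M} \<subseteq> {0..L}"
    "p2 A = p A" "p2 M = p M + e * \<eta>" "p2' M = - e * s"
    "integral {A..M} (\<lambda>t. theta \<rho> (h t) (curve_pt Q (p2 t)))
       \<le> integral {A..M} (\<lambda>t. theta \<rho> (h t) (curve_pt Q (p t))) + 2 * \<delta> + 3 * \<eta> / s"
proof -
  let ?I = "\<lambda>f. integral {A..M} (\<lambda>t. theta \<rho> (h t) (curve_pt Q (f t)))"
  have pc: "stationary_pieces 1 (\<lambda>j. if j = 0 then A else M) h A M"
    by (rule stationary_pieces_single[OF hw AM])
  have ee: "e * e = 1" using e by auto
  have "e * (p M + e * (2 * \<eta>) - p A) = e * (p M - p A) + (e * e) * (2 * \<eta>)"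
    by (simp add: algebra_simps)
  then have feas1: "e * (p M + e * (2 * \<eta>) - p A) \<le> s * (M - A)"
    using slack ee by simp
  obtain p1 p1' where P1: "speed_bounded_deriv s A M p1 p1'" "p1 ` {A..M} \<subseteq> {0..L}"
      "p1 A = p A" "p1 M = p M + e * (2 * \<eta>)" "p1' M = e * s"
      "?I p1 \<le> ?I p + \<delta> + real 1 * (2 * \<eta>) / s"
    by (rule shift_path_end[OF AM s pp prng e _ room feas1 \<delta> pc]) (use \<eta> in simp)
  have "p M \<in> {0..L}" using prng AM by (auto simp: image_subset_iff)
  then have room2: "p1 M + (- e) * \<eta> \<in> {0..L}" using room P1(4) e \<eta> by (elim disjE) auto
  have "\<bar>p M - p A\<bar> \<le> s * (M - A)"
    using speed_bounded_deriv_lipschitz[OF pp, of M A] AM by auto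
  then have feas2: "(- e) * (p1 M + (- e) * \<eta> - p1 A) \<le> s * (M - A)"
    using P1(3,4) e \<eta> by (elim disjE) (auto simp: algebra_simps)
  have e2: "- e = 1 \<or> - e = -1" using e by auto
  obtain p2 p2' where P2: "speed_bounded_deriv s A M p2 p2'" "p2 ` {A..M} \<subseteq> {0..L}"
      "p2 A = p1 A" "p2 M = p1 M + (- e) * \<eta>" "p2' M = (- e) * s"
      "?I p2 \<le> ?I p1 + \<delta> + real 1 * \<eta> / s"
    by (rule shift_path_end[OF AM s P1(1,2) e2 \<eta> room2 feas2 \<delta> pc])
  have "?I p2 \<le> ?I p + 2 * \<delta> + 3 * \<eta> / s"
    using P1(6) P2(6) by (simp add: add_divide_distrib)
  moreover have "p2 M = p M + e * \<eta>" using P1(4) P2(3,4) by (simp add: algebra_simps)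
  ultimately show ?thesis using that P2 P1(3) by simp
qed

lemma shift_path_start:
  fixes q q' :: "real \<Rightarrow> real" and h :: "real \<Rightarrow> 'a::real_normed_vector"
  assumes MB: "M \<le> B" and s: "0 < s" and hw: "\<And>t. t \<in> {M<..<B} \<Longrightarrow> h t = w"
    and qq: "speed_bounded_deriv s M B q q'" and qrng: "q ` {M..B} \<subseteq> {0..L}"
    and e: "e = 1 \<or> e = -1" and \<eta>: "0 < \<eta>" and \<delta>: "0 < \<delta>"
    and room: "q M + e * \<eta> \<in> {0..L}"
    and slack: "e * (q M - q B) + \<eta> \<le> s * (B - M)"
  obtains q2 q2' where "speed_bounded_deriv s M B q2 q2'" "q2 ` {M..B} \<subseteq> {0..L}"
    "q2 B = q B" "q2 M = q M + e * \<eta>" "q2' M = - e * s"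
    "integral {M..B} (\<lambda>t. theta \<rho> (h t) (curve_pt Q (q2 t)))
       \<le> integral {M..B} (\<lambda>t. theta \<rho> (h t) (curve_pt Q (q t))) + \<delta> + \<eta> / s"
proof -
  let ?I = "\<lambda>f. integral {M..B} (\<lambda>t. theta \<rho> (h t) (curve_pt Q (f t)))"
  have pc: "stationary_pieces 1 (\<lambda>j. if j = 0 then M else B) h M B"
    by (rule stationary_pieces_single[OF hw MB])
  have reflect_range: "(\<lambda>t. f (M + B - t)) ` {M..B} \<subseteq> {0..L}" if "f ` {M..B} \<subseteq> {0..L}" for f
    using that by (auto simp: image_subset_iff)
  define qr where "qr t = q (M + B - t)" for t
  have feas: "e * (qr B + e * \<eta> - qr M) \<le> s * (B - M)"
    using slack e by (elim disjE) (auto simp: qr_def algebra_simps)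
  have target: "qr B + e * \<eta> \<in> {0..L}" using room by (simp add: qr_def)
  obtain q3 q3' where Q3: "speed_bounded_deriv s M B q3 q3'" "q3 ` {M..B} \<subseteq> {0..L}"
      "q3 M = qr M" "q3 B = qr B + e * \<eta>" "q3' B = e * s" "?I q3 \<le> ?I qr + \<delta> + real 1 * \<eta> / s"
    by (rule shift_path_end[OF MB s speed_bounded_deriv_reflect[OF qq] reflect_range[OF qrng] e \<eta>
          target[unfolded qr_def] feas[unfolded qr_def] \<delta> pc, folded qr_def])
  have "?I qr = ?I q"
    unfolding qr_def by (rule cost_reflect[OF MB hw speed_bounded_deriv_continuous_on[OF qq]])
  moreover have "?I (\<lambda>t. q3 (M + B - t)) = ?I q3"
    by (rule cost_reflect[OF MB hw speed_bounded_deriv_continuous_on[OF Q3(1)]])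
  ultimately show ?thesis
    using that[OF speed_bounded_deriv_reflect[OF Q3(1)] reflect_range[OF Q3(2)]] Q3(3-6)
    by (simp add: qr_def)
qed

lemma splice_paths_with_room:
  fixes p q p' q' :: "real \<Rightarrow> real" and h :: "real \<Rightarrow> 'a::real_normed_vector"
  assumes AM: "A \<le> M" and MB: "M \<le> B" and hw: "\<And>t. t \<in> {A<..<B} \<Longrightarrow> h t = w"
    and pp: "speed_bounded_deriv s A M p p'" and prng: "p ` {A..M} \<subseteq> {0..L}"
    and qq: "speed_bounded_deriv s M B q q'" and qrng: "q ` {M..B} \<subseteq> {0..L}"
    and pq: "p M = q M" and \<epsilon>: "0 < \<epsilon>" and s: "0 < s" and e: "e = 1 \<or> e = -1"
    and room: "0 < (if e = 1 then L - p M else p M)"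
    and slack: "e * (p M - p A) < s * (M - A)" "e * (p M - q B) < s * (B - M)"
  shows "\<exists>r r'. speed_bounded_deriv s A B r r' \<and> r ` {A..B} \<subseteq> {0..L} \<and> r A = p A \<and> r B = q B \<and>
     integral {A..B} (\<lambda>t. theta \<rho> (h t) (curve_pt Q (r t)))
       \<le> integral {A..M} (\<lambda>t. theta \<rho> (h t) (curve_pt Q (p t)))
        + integral {M..B} (\<lambda>t. theta \<rho> (h t) (curve_pt Q (q t))) + \<epsilon>"
proof -
  let ?I = "\<lambda>a b (f::real\<Rightarrow>real). integral {a..b} (\<lambda>t. theta \<rho> (h t) (curve_pt Q (f t)))"
  define \<sigma> where "\<sigma> = min (if e = 1 then L - p M else p M) (min (s * (M - A) - e * (p M - p A)) (s * (B - M) - e * (p M - q B)))"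
  have "\<sigma> \<le> (if e = 1 then L - p M else p M)" "\<sigma> \<le> s * (M - A) - e * (p M - p A)"
    "\<sigma> \<le> s * (B - M) - e * (p M - q B)"
    unfolding \<sigma>_def by (meson min.cobounded1 min.cobounded2 order_trans)+
  moreover have "0 < \<sigma>" using room slack unfolding \<sigma>_def by auto
  ultimately have \<sigma>: "0 < \<sigma>" "\<sigma> \<le> (if e = 1 then L - p M else p M)"
    "\<sigma> \<le> s * (M - A) - e * (p M - p A)" "\<sigma> \<le> s * (B - M) - e * (p M - q B)"
    by auto
  define \<eta> where "\<eta> = min (\<sigma> / 3) (s * \<epsilon> / 12)"
  have "\<eta> \<le> \<sigma> / 3" "\<eta> \<le> s * \<epsilon> / 12" unfolding \<eta>_def by auto
  moreover have "0 < \<eta>" using \<sigma> s \<epsilon> unfolding \<eta>_def by auto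
  ultimately have \<eta>: "0 < \<eta>" "3 * \<eta> \<le> \<sigma>" "4 * \<eta> / s \<le> \<epsilon> / 3"
    using s by (auto simp: divide_simps mult.commute)
  define \<delta> where "\<delta> = \<epsilon> / 6"
  have \<delta>: "0 < \<delta>" using \<epsilon> unfolding \<delta>_def by auto
  have pM: "p M \<in> {0..L}" using prng AM by (auto simp: image_subset_iff)
  have room_p: "p M + e * (2 * \<eta>) \<in> {0..L}" using pM e \<sigma>(2) \<eta> by (elim disjE) auto
  have slack_p: "e * (p M - p A) + 2 * \<eta> \<le> s * (M - A)" using \<sigma>(3) \<eta> by linarith
  obtain p2 p2' where P2: "speed_bounded_deriv s A M p2 p2'" "p2 ` {A..M} \<subseteq> {0..L}"
      "p2 A = p A" "p2 M = p M + e * \<eta>" "p2' M = - e * s" "?I A M p2 \<le> ?I A M p + 2 * \<delta> + 3 * \<eta> / s"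
    by (rule bend_path_end[where h=h and w=w and \<rho>=\<rho> and Q=Q, OF AM s _ pp prng e \<eta>(1) \<delta> room_p slack_p]) (use hw MB in auto)
  have room_q: "q M + e * \<eta> \<in> {0..L}" using pM pq e \<sigma>(2) \<eta> by (elim disjE) auto
  have slack_q: "e * (q M - q B) + \<eta> \<le> s * (B - M)" using \<sigma>(4) \<eta> unfolding pq[symmetric] by linarith
  obtain q2 q2' where Q2: "speed_bounded_deriv s M B q2 q2'" "q2 ` {M..B} \<subseteq> {0..L}"
      "q2 B = q B" "q2 M = q M + e * \<eta>" "q2' M = - e * s" "?I M B q2 \<le> ?I M B q + \<delta> + \<eta> / s"
    by (rule shift_path_start[where h=h and w=w and \<rho>=\<rho> and Q=Q, OF MB s _ qq qrng e \<eta>(1) \<delta> room_q slack_q]) (use hw AM in auto)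
  let ?r = "\<lambda>t. if t \<le> M then p2 t else q2 t"
  have sr: "speed_bounded_deriv s A B ?r (\<lambda>t. if t \<le> M then p2' t else q2' t)"
    by (rule speed_bounded_deriv_glue[OF AM MB P2(1) Q2(1)]) (use P2(4,5) Q2(4,5) pq in auto)
  have "?I A B ?r = ?I A M p2 + ?I M B q2"
    by (rule cost_glue[OF AM MB hw _ _ speed_bounded_deriv_continuous_on[OF sr]]) (use P2(4) Q2(4) pq in auto)
  also have "\<dots> \<le> ?I A M p + ?I M B q + \<epsilon>"
  proof -
    have "3 * \<eta> / s + \<eta> / s = 4 * \<eta> / s" by (simp add: add_divide_distrib[symmetric])
    then show ?thesis using P2(6) Q2(6) \<eta>(3) \<epsilon> unfolding \<delta>_def by linarith
  qed
  finally have cost: "?I A B ?r \<le> ?I A M p + ?I M B q + \<epsilon>" .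
  have "M \<noteq> B" using slack(2) pq by auto
  then have "?r B = q B" using Q2(3) MB by simp
  moreover have "?r ` {A..B} \<subseteq> {0..L}" using P2(2) Q2(2) by (auto simp: image_subset_iff)
  ultimately show ?thesis using sr cost P2(3) AM
    by (intro exI[of _ ?r] exI[of _ "\<lambda>t. if t \<le> M then p2' t else q2' t"]) simp
qed

lemma tight_paths_common_line:
  fixes p q p' q' :: "real \<Rightarrow> real"
  assumes AM: "A < M" and MB: "M < B" and s: "0 < s"
    and pp: "speed_bounded_deriv s A M p p'" and prng: "p ` {A..M} \<subseteq> {0..L}"
    and qq: "speed_bounded_deriv s M B q q'" and qrng: "q ` {M..B} \<subseteq> {0..L}"
    and pq: "p M = q M"
    and no_room_up: "\<not> (p M < L \<and> p M - p A < s * (M - A) \<and> p M - q B < s * (B - M))"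
    and no_room_down: "\<not> (0 < p M \<and> p A - p M < s * (M - A) \<and> q B - p M < s * (B - M))"
  obtains \<kappa> where "\<bar>\<kappa>\<bar> \<le> s" "\<And>t. t \<in> {A..M} \<Longrightarrow> p t = p M + \<kappa> * (t - M)"
    "\<And>t. t \<in> {M..B} \<Longrightarrow> q t = p M + \<kappa> * (t - M)"
proof -
  have "0 \<le> p A" "p A \<le> L" "0 \<le> p M" "p M \<le> L" using prng AM by (auto simp: image_subset_iff)
  moreover have "0 \<le> q B" "q B \<le> L" using qrng MB by (auto simp: image_subset_iff)
  moreover have "0 < s * (M - A)" "0 < s * (B - M)" using s AM MB by auto
  moreover have "\<bar>p M - p A\<bar> \<le> s * (M - A)" using speed_bounded_deriv_lipschitz[OF pp, of M A] AM by auto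
  moreover have "\<bar>p M - q B\<bar> \<le> s * (B - M)"
    using speed_bounded_deriv_lipschitz[OF qq, of M B] MB pq by auto
  moreover have "L \<le> p M \<or> s * (M - A) \<le> p M - p A \<or> s * (B - M) \<le> p M - q B"
    using no_room_up by auto
  moreover have "p M \<le> 0 \<or> s * (M - A) \<le> p A - p M \<or> s * (B - M) \<le> q B - p M"
    using no_room_down by auto
  ultimately consider (up) "p M - p A = s * (M - A)" "q B - p M = s * (B - M)"
    | (down) "p A - p M = s * (M - A)" "p M - q B = s * (B - M)"
    | (flat) "L = 0"
    by (simp add: abs_le_iff) linarith
  then show ?thesis
  proof cases
    case up
    show ?thesis
    proof (rule that[of s])
      show "p t = p M + s * (t - M)" if "t \<in> {A..M}" for t
        using speed_bounded_deriv_tight_linear[OF pp _ _ _ that, of 1] up AM by (auto simp: algebra_simps)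
      show "q t = p M + s * (t - M)" if "t \<in> {M..B}" for t
        using speed_bounded_deriv_tight_linear[OF qq _ _ _ that, of 1] up MB pq by (auto simp: algebra_simps)
    qed (use s in auto)
  next
    case down
    show ?thesis
    proof (rule that[of "- s"])
      show "p t = p M + - s * (t - M)" if "t \<in> {A..M}" for t
        using speed_bounded_deriv_tight_linear[OF pp _ _ _ that, of "-1"] down AM by (auto simp: algebra_simps)
      show "q t = p M + - s * (t - M)" if "t \<in> {M..B}" for t
        using speed_bounded_deriv_tight_linear[OF qq _ _ _ that, of "-1"] down MB pq by (auto simp: algebra_simps)
    qed (use s in auto)
  next
    case flat
    show ?thesis
      by (rule that[of 0]) (use s prng qrng flat AM MB in \<open>auto simp: image_subset_iff\<close>)
  qed
qed

text \<open>The two pieces may have different speeds at \<open>M\<close>, hence the extra \<open>\<epsilon>\<close>.\<close>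

lemma splice_paths:
  fixes p q p' q' :: "real \<Rightarrow> real" and h :: "real \<Rightarrow> 'a::real_normed_vector"
  assumes AM: "A \<le> M" and MB: "M \<le> B" and hw: "\<And>t. t \<in> {A<..<B} \<Longrightarrow> h t = w"
    and pp: "speed_bounded_deriv s A M p p'" and prng: "p ` {A..M} \<subseteq> {0..L}"
    and qq: "speed_bounded_deriv s M B q q'" and qrng: "q ` {M..B} \<subseteq> {0..L}"
    and pq: "p M = q M" and \<epsilon>: "0 < \<epsilon>"
  shows "\<exists>r r'. speed_bounded_deriv s A B r r' \<and> r ` {A..B} \<subseteq> {0..L} \<and> r A = p A \<and> r B = q B \<and>
     integral {A..B} (\<lambda>t. theta \<rho> (h t) (curve_pt Q (r t)))
       \<le> integral {A..M} (\<lambda>t. theta \<rho> (h t) (curve_pt Q (p t)))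
        + integral {M..B} (\<lambda>t. theta \<rho> (h t) (curve_pt Q (q t))) + \<epsilon>"
proof -
  let ?I = "\<lambda>a b (f::real\<Rightarrow>real). integral {a..b} (\<lambda>t. theta \<rho> (h t) (curve_pt Q (f t)))"
  consider "p' M = q' M" | "A = M" | "M = B" | "p' M \<noteq> q' M" "A < M" "M < B" using AM MB by linarith
  then show ?thesis
  proof cases
    case 1
    let ?r = "\<lambda>t. if t \<le> M then p t else q t"
    have sr: "speed_bounded_deriv s A B ?r (\<lambda>t. if t \<le> M then p' t else q' t)"
      by (rule speed_bounded_deriv_glue[OF AM MB pp qq pq 1])
    have "?I A B ?r = ?I A M p + ?I M B q"
      by (rule cost_glue[OF AM MB hw _ _ speed_bounded_deriv_continuous_on[OF sr]]) (use pq in auto)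
    then show ?thesis using sr prng qrng \<epsilon> AM MB pq
      by (intro exI[of _ ?r] exI) (auto simp: image_subset_iff)
  next
    case 2
    then show ?thesis using qq qrng \<epsilon> pq by (intro exI[of _ q] exI[of _ q']) auto
  next
    case 3
    then show ?thesis using pp prng \<epsilon> pq by (intro exI[of _ p] exI[of _ p']) auto
  next
    case 4
    have "\<bar>p' M\<bar> \<le> s" "\<bar>q' M\<bar> \<le> s"
      using pp qq AM MB unfolding speed_bounded_deriv_def by auto
    then have s: "0 < s" using 4(1) by (auto simp: abs_le_iff)
    consider (up) "p M < L \<and> p M - p A < s * (M - A) \<and> p M - q B < s * (B - M)"
      | (down) "0 < p M \<and> p A - p M < s * (M - A) \<and> q B - p M < s * (B - M)"
      | (tight) "\<not> (p M < L \<and> p M - p A < s * (M - A) \<and> p M - q B < s * (B - M))"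
          "\<not> (0 < p M \<and> p A - p M < s * (M - A) \<and> q B - p M < s * (B - M))"
      by blast
    then show ?thesis
    proof cases
      case up
      then show ?thesis
        by (intro splice_paths_with_room[where \<rho>=\<rho> and Q=Q and e=1, OF AM MB hw pp prng qq qrng pq \<epsilon> s]) auto
    next
      case down
      then show ?thesis
        by (intro splice_paths_with_room[where \<rho>=\<rho> and Q=Q and e="-1", OF AM MB hw pp prng qq qrng pq \<epsilon> s])
          (auto simp: algebra_simps)
    next
      case tight
      obtain \<kappa> where \<kappa>: "\<bar>\<kappa>\<bar> \<le> s" "\<And>t. t \<in> {A..M} \<Longrightarrow> p t = p M + \<kappa> * (t - M)"
          "\<And>t. t \<in> {M..B} \<Longrightarrow> q t = p M + \<kappa> * (t - M)"
        using tight_paths_common_line[OF 4(2,3) s pp prng qq qrng pq tight] by blast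
      let ?r = "\<lambda>t. p M + \<kappa> * (t - M)"
      have sr: "speed_bounded_deriv s A B ?r (\<lambda>t. \<kappa>)"
        unfolding speed_bounded_deriv_def using \<kappa>(1) by (auto intro!: derivative_eq_intros)
      have "?r ` {A..B} \<subseteq> {0..L}"
      proof (rule image_subsetI)
        fix t assume t: "t \<in> {A..B}"
        show "?r t \<in> {0..L}"
        proof (cases "t \<le> M")
          case True
          then have "p t \<in> {0..L}" using prng t by (auto simp: image_subset_iff)
          then show ?thesis using \<kappa>(2)[of t] True t by simp
        next
          case False
          then have "q t \<in> {0..L}" using qrng t by (auto simp: image_subset_iff)
          then show ?thesis using \<kappa>(3)[of t] False t by simp
        qed
      qed
      moreover have "?I A B ?r = ?I A M p + ?I M B q"
        by (rule cost_glue[OF AM MB hw _ _ speed_bounded_deriv_continuous_on[OF sr]])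
          (use \<kappa>(2,3)[symmetric] in auto)
      ultimately show ?thesis using sr \<epsilon> \<kappa>(2)[of A] \<kappa>(3)[of B] AM MB
        by (intro exI[of _ ?r] exI[of _ "\<lambda>t. \<kappa>"]) auto
    qed
  qed
qed

section \<open>Optimal costs between fixed endpoints\<close>

definition opt_cost ::
  "real \<Rightarrow> real \<Rightarrow> (real \<Rightarrow> 'a::real_normed_vector) \<Rightarrow> 'a list \<Rightarrow> real \<Rightarrow> real \<Rightarrow> real \<Rightarrow> real \<Rightarrow> ereal"
  where
  "opt_cost \<rho> s h Q a b x y = (INF \<gamma>\<in>dog_paths Q s a b x y. ereal (cost \<rho> h Q a b \<gamma>))"

lemma F_cost_eq_opt_cost: "F_cost \<rho> s h P Q j lam = opt_cost \<rho> s h Q 0 (vx P j) 0 lam"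
  unfolding F_cost_def opt_cost_def by simp

lemma f_cost_eq_opt_cost: "f_cost \<rho> s h P Q i a b = opt_cost \<rho> s h Q (vx P (i - 1)) (vx P i) a b"
  unfolding f_cost_def opt_cost_def by simp

lemma cost_nonneg: "0 \<le> cost \<rho> h Q a b \<gamma>"
  unfolding cost_def
proof (cases "(\<lambda>t. theta \<rho> (h t) (curve_pt Q (\<gamma> t))) integrable_on {a..b}")
  case True then show "0 \<le> integral {a..b} (\<lambda>t. theta \<rho> (h t) (curve_pt Q (\<gamma> t)))"
    by (rule integral_nonneg) (simp add: theta_bounds)
next
  case False then show "0 \<le> integral {a..b} (\<lambda>t. theta \<rho> (h t) (curve_pt Q (\<gamma> t)))"
    by (simp add: not_integrable_integral)
qed

lemma opt_cost_nonneg: "0 \<le> opt_cost \<rho> s h Q a b x y"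
  unfolding opt_cost_def by (rule INF_greatest) (simp add: cost_nonneg)

lemma opt_cost_le: "\<gamma> \<in> dog_paths Q s a b x y \<Longrightarrow> opt_cost \<rho> s h Q a b x y \<le> ereal (cost \<rho> h Q a b \<gamma>)"
  unfolding opt_cost_def by (rule INF_lower)

lemma opt_cost_approx:
  assumes "opt_cost \<rho> s h Q a b x y = ereal r" "0 < \<epsilon>"
  shows "\<exists>\<gamma>\<in>dog_paths Q s a b x y. cost \<rho> h Q a b \<gamma> < r + \<epsilon>"
proof -
  have "opt_cost \<rho> s h Q a b x y < ereal (r + \<epsilon>)" using assms by simp
  then show ?thesis unfolding opt_cost_def by (auto simp: INF_less_iff)
qed

lemma INF_le_INF_plus:
  fixes c :: real
  assumes "\<And>x \<delta>. x \<in> S2 \<Longrightarrow> 0 < \<delta> \<Longrightarrow> \<exists>y\<in>S1. g1 y \<le> g2 x + \<delta> + c"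
    and nn: "\<And>x. x \<in> S2 \<Longrightarrow> 0 \<le> g2 x"
  shows "(INF y\<in>S1. ereal (g1 y)) \<le> (INF x\<in>S2. ereal (g2 x)) + ereal c"
proof (cases "S2 = {}")
  case True then show ?thesis by (simp add: top_ereal_def)
next
  case False
  have "(INF y\<in>S1. ereal (g1 y)) \<le> ereal (g2 x) + ereal c" if x: "x \<in> S2" for x
  proof (rule ereal_le_epsilon2)
    fix e :: real assume e: "0 < e"
    obtain y where y: "y \<in> S1" "g1 y \<le> g2 x + e + c" using assms(1)[OF x e] by auto
    have "(INF y\<in>S1. ereal (g1 y)) \<le> ereal (g1 y)" using y(1) by (rule INF_lower)
    also have "\<dots> \<le> ereal (g2 x) + ereal c + ereal e" using y(2) by simp
    finally show "(INF y\<in>S1. ereal (g1 y)) \<le> ereal (g2 x) + ereal c + ereal e" .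
  qed
  then have "(INF y\<in>S1. ereal (g1 y)) \<le> (INF x\<in>S2. ereal (g2 x) + ereal c)"
    by (rule INF_greatest)
  also have "\<dots> = (INF x\<in>S2. ereal (g2 x)) + ereal c"
    by (rule INF_ereal_add_left) (use False nn in auto)
  finally show ?thesis .
qed

lemma dog_paths_nonempty_iff:
  assumes ab: "a \<le> b"
  shows "dog_paths Q s a b x y \<noteq> {} \<longleftrightarrow>
    0 \<le> s \<and> x \<in> {0..curve_len Q} \<and> y \<in> {0..curve_len Q} \<and> \<bar>y - x\<bar> \<le> s * (b - a)"
proof
  assume "dog_paths Q s a b x y \<noteq> {}"
  then obtain \<gamma>0 where "\<gamma>0 \<in> dog_paths Q s a b x y" by blast
  then obtain \<gamma> \<gamma>' where g: "speed_bounded_deriv s a b \<gamma> \<gamma>'" "\<gamma> ` {a..b} \<subseteq> {0..curve_len Q}" "\<gamma> a = x" "\<gamma> b = y"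
    unfolding dog_paths_iff by blast
  have "\<bar>\<gamma>' a\<bar> \<le> s" using g(1) ab unfolding speed_bounded_deriv_def by auto
  then have "0 \<le> s" by auto
  moreover have "x \<in> {0..curve_len Q}" "y \<in> {0..curve_len Q}" using g ab by (auto simp: image_subset_iff)
  moreover have "\<bar>y - x\<bar> \<le> s * (b - a)" using speed_bounded_deriv_lipschitz[OF g(1), of b a] g ab by auto
  ultimately show "0 \<le> s \<and> x \<in> {0..curve_len Q} \<and> y \<in> {0..curve_len Q} \<and> \<bar>y - x\<bar> \<le> s * (b - a)" by auto
next
  assume H: "0 \<le> s \<and> x \<in> {0..curve_len Q} \<and> y \<in> {0..curve_len Q} \<and> \<bar>y - x\<bar> \<le> s * (b - a)"
  show "dog_paths Q s a b x y \<noteq> {}"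
  proof (cases "a = b")
    case True
    then have xy: "x = y" using H by auto
    have "speed_bounded_deriv s a b (\<lambda>t. x) (\<lambda>t. 0)" unfolding speed_bounded_deriv_def using H by auto
    then have "(\<lambda>t. x) \<in> dog_paths Q s a b x y" unfolding dog_paths_iff using H xy by auto
    then show ?thesis by auto
  next
    case False
    then have ab': "a < b" using ab by auto
    define \<kappa> where "\<kappa> = (y - x) / (b - a)"
    have k1: "\<bar>\<kappa>\<bar> = \<bar>y - x\<bar> / (b - a)" using ab' unfolding \<kappa>_def by (simp add: abs_divide)
    have k: "\<bar>\<kappa>\<bar> \<le> s" unfolding k1 using H ab' by (simp add: pos_divide_le_eq)
    have sb: "speed_bounded_deriv s a b (\<lambda>t. x + \<kappa> * (t - a)) (\<lambda>t. \<kappa>)"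
      unfolding speed_bounded_deriv_def using k by (auto intro!: derivative_eq_intros)
    have rng: "(\<lambda>t. x + \<kappa> * (t - a)) ` {a..b} \<subseteq> {0..curve_len Q}"
    proof
      fix z assume "z \<in> (\<lambda>t. x + \<kappa> * (t - a)) ` {a..b}"
      then obtain t where t: "t \<in> {a..b}" "z = x + \<kappa> * (t - a)" by auto
      define l where "l = (t - a) / (b - a)"
      have l: "0 \<le> l" "l \<le> 1" using t ab' unfolding l_def by (auto simp: divide_simps)
      have "\<kappa> * (t - a) = l * (y - x)" unfolding l_def \<kappa>_def by simp
      then have z: "z = (1 - l) * x + l * y" using t(2) by (simp add: algebra_simps)
      have "0 \<le> (1 - l) * x + l * y" using H l by (intro add_nonneg_nonneg mult_nonneg_nonneg) auto
      moreover have "(1 - l) * x + l * y \<le> (1 - l) * curve_len Q + l * curve_len Q"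
        using H l by (intro add_mono mult_left_mono) auto
      ultimately show "z \<in> {0..curve_len Q}" using z by (simp add: algebra_simps)
    qed
    have "x + \<kappa> * (b - a) = y" using ab' unfolding \<kappa>_def by simp
    then have "(\<lambda>t. x + \<kappa> * (t - a)) \<in> dog_paths Q s a b x y" unfolding dog_paths_iff using sb rng by auto
    then show ?thesis by auto
  qed
qed

lemma opt_cost_finite_iff:
  assumes "a \<le> b"
  shows "opt_cost \<rho> s h Q a b x y < \<infinity> \<longleftrightarrow>
    0 \<le> s \<and> x \<in> {0..curve_len Q} \<and> y \<in> {0..curve_len Q} \<and> \<bar>y - x\<bar> \<le> s * (b - a)"
proof -
  have "opt_cost \<rho> s h Q a b x y < \<infinity> \<longleftrightarrow> dog_paths Q s a b x y \<noteq> {}"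
  proof
    assume "opt_cost \<rho> s h Q a b x y < \<infinity>"
    then show "dog_paths Q s a b x y \<noteq> {}" by (auto simp: opt_cost_def top_ereal_def)
  next
    assume "dog_paths Q s a b x y \<noteq> {}"
    then obtain \<gamma> where "\<gamma> \<in> dog_paths Q s a b x y" by auto
    then have "opt_cost \<rho> s h Q a b x y \<le> ereal (cost \<rho> h Q a b \<gamma>)" by (rule opt_cost_le)
    then show "opt_cost \<rho> s h Q a b x y < \<infinity>" by (rule le_less_trans) simp
  qed
  then show ?thesis using dog_paths_nonempty_iff[OF assms] by simp
qed

lemma opt_cost_endpoint_lipschitz:
  fixes h :: "real \<Rightarrow> 'a::real_normed_vector"
  assumes ab: "a \<le> b" and s: "0 < s" and pc: "stationary_pieces k bb h a b"
    and y1: "y1 \<in> {0..curve_len Q}" "\<bar>y1 - x\<bar> \<le> s * (b - a)"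
  shows "opt_cost \<rho> s h Q a b x y1 \<le> opt_cost \<rho> s h Q a b x y2 + ereal (k * \<bar>y1 - y2\<bar> / s)"
  unfolding opt_cost_def
proof (rule INF_le_INF_plus)
  fix \<gamma> \<delta> assume g: "\<gamma> \<in> dog_paths Q s a b x y2" and d: "0 < (\<delta>::real)"
  obtain \<gamma>' where g1: "speed_bounded_deriv s a b \<gamma> \<gamma>'" "\<gamma> ` {a..b} \<subseteq> {0..curve_len Q}" "\<gamma> a = x" "\<gamma> b = y2"
    using g unfolding dog_paths_iff by blast
  show "\<exists>y\<in>dog_paths Q s a b x y1. cost \<rho> h Q a b y \<le> cost \<rho> h Q a b \<gamma> + \<delta> + k * \<bar>y1 - y2\<bar> / s"
  proof (cases "y1 = y2")
    case True then show ?thesis using g d by (intro bexI[of _ \<gamma>]) auto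
  next
    case False
    define e where "e = (if y2 < y1 then 1 else -1::real)"
    have e: "e = 1 \<or> e = -1" unfolding e_def by auto
    have dd: "0 < \<bar>y1 - y2\<bar>" using False by auto
    have tgt: "\<gamma> b + e * \<bar>y1 - y2\<bar> = y1" using g1(4) False unfolding e_def by auto
    have nu: "\<gamma> b + e * \<bar>y1 - y2\<bar> \<in> {0..curve_len Q}" using tgt y1 by simp
    have feas: "e * (\<gamma> b + e * \<bar>y1 - y2\<bar> - \<gamma> a) \<le> s * (b - a)"
      using tgt g1(3) y1(2) e by (elim disjE) auto
    obtain \<gamma>2 \<gamma>2' where G: "speed_bounded_deriv s a b \<gamma>2 \<gamma>2'" "\<gamma>2 ` {a..b} \<subseteq> {0..curve_len Q}" "\<gamma>2 a = \<gamma> a"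
        "\<gamma>2 b = \<gamma> b + e * \<bar>y1 - y2\<bar>" "\<gamma>2' b = e * s"
        "integral {a..b} (\<lambda>t. theta \<rho> (h t) (curve_pt Q (\<gamma>2 t)))
           \<le> integral {a..b} (\<lambda>t. theta \<rho> (h t) (curve_pt Q (\<gamma> t))) + \<delta> + k * \<bar>y1 - y2\<bar> / s"
      by (rule shift_path_end[OF ab s g1(1) g1(2) e dd nu feas d pc])
    have "\<gamma>2 \<in> dog_paths Q s a b x y1" unfolding dog_paths_iff using G g1 tgt by auto
    then show ?thesis using G(6) unfolding cost_def by blast
  qed
qed (rule cost_nonneg)

lemma opt_cost_swap:
  fixes h :: "real \<Rightarrow> 'a::real_normed_vector"
  assumes ab: "a \<le> b" and hw: "\<And>t. t \<in> {a<..<b} \<Longrightarrow> h t = w"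
  shows "opt_cost \<rho> s h Q a b x y = opt_cost \<rho> s h Q a b y x"
proof -
  have *: "opt_cost \<rho> s h Q a b x y \<le> opt_cost \<rho> s h Q a b y x" for x y
    unfolding opt_cost_def
  proof (rule INF_greatest)
    fix \<gamma> assume g: "\<gamma> \<in> dog_paths Q s a b y x"
    obtain \<gamma>' where g1: "speed_bounded_deriv s a b \<gamma> \<gamma>'" "\<gamma> ` {a..b} \<subseteq> {0..curve_len Q}" "\<gamma> a = y" "\<gamma> b = x"
      using g unfolding dog_paths_iff by blast
    have s2: "speed_bounded_deriv s a b (\<lambda>t. \<gamma> (a + b - t)) (\<lambda>t. - \<gamma>' (a + b - t))" by (rule speed_bounded_deriv_reflect[OF g1(1)])
    have r2: "(\<lambda>t. \<gamma> (a + b - t)) ` {a..b} \<subseteq> {0..curve_len Q}"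
      using g1(2) by (auto simp: image_subset_iff)
    have mem: "(\<lambda>t. \<gamma> (a + b - t)) \<in> dog_paths Q s a b x y"
      unfolding dog_paths_iff using s2 r2 g1 by auto
    have "cost \<rho> h Q a b (\<lambda>t. \<gamma> (a + b - t)) = cost \<rho> h Q a b \<gamma>"
      unfolding cost_def by (rule cost_reflect[OF ab hw speed_bounded_deriv_continuous_on[OF g1(1)]])
    then show "(INF \<gamma>\<in>dog_paths Q s a b x y. ereal (cost \<rho> h Q a b \<gamma>)) \<le> ereal (cost \<rho> h Q a b \<gamma>)"
      using INF_lower[OF mem, of "\<lambda>\<gamma>. ereal (cost \<rho> h Q a b \<gamma>)"] by simp
  qed
  show ?thesis using *[of x y] *[of y x] by simp
qed

lemma exchange_tails_at_crossing:
  fixes h :: "real \<Rightarrow> 'a::real_normed_vector"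
  assumes ab: "a \<le> b" and hw: "\<And>t. t \<in> {a<..<b} \<Longrightarrow> h t = w"
    and \<beta>1: "\<beta>1 \<in> dog_paths Q s a b \<mu>1 l1" and \<beta>2: "\<beta>2 \<in> dog_paths Q s a b \<mu>2 l2"
    and m: "\<mu>2 < \<mu>1" and l: "l1 < l2" and \<epsilon>: "0 < \<epsilon>"
  obtains r1 r2 where "r1 \<in> dog_paths Q s a b \<mu>1 l2" "r2 \<in> dog_paths Q s a b \<mu>2 l1"
    "cost \<rho> h Q a b r1 + cost \<rho> h Q a b r2 \<le> cost \<rho> h Q a b \<beta>1 + cost \<rho> h Q a b \<beta>2 + 2 * \<epsilon>"
proof -
  let ?I = "\<lambda>u v (f::real\<Rightarrow>real). integral {u..v} (\<lambda>t. theta \<rho> (h t) (curve_pt Q (f t)))"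
  obtain \<beta>1' where B1: "speed_bounded_deriv s a b \<beta>1 \<beta>1'" "\<beta>1 ` {a..b} \<subseteq> {0..curve_len Q}"
      "\<beta>1 a = \<mu>1" "\<beta>1 b = l1"
    using \<beta>1 unfolding dog_paths_iff by blast
  obtain \<beta>2' where B2: "speed_bounded_deriv s a b \<beta>2 \<beta>2'" "\<beta>2 ` {a..b} \<subseteq> {0..curve_len Q}"
      "\<beta>2 a = \<mu>2" "\<beta>2 b = l2"
    using \<beta>2 unfolding dog_paths_iff by blast
  have "continuous_on {a..b} (\<lambda>t. \<beta>1 t - \<beta>2 t)"
    using speed_bounded_deriv_continuous_on[OF B1(1)] speed_bounded_deriv_continuous_on[OF B2(1)]
    by (intro continuous_intros)
  then obtain m where mm: "a \<le> m" "m \<le> b" "\<beta>1 m - \<beta>2 m = 0"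
    using IVT2'[of "\<lambda>t. \<beta>1 t - \<beta>2 t" b 0 a, OF _ _ ab] B1 B2 m l by auto
  have sub: "X ` {u..v} \<subseteq> {0..curve_len Q}" if "X ` {a..b} \<subseteq> {0..curve_len Q}" "a \<le> u" "v \<le> b" for X u v
    using that by auto
  obtain r1 r1' where R1: "speed_bounded_deriv s a b r1 r1'" "r1 ` {a..b} \<subseteq> {0..curve_len Q}"
      "r1 a = \<beta>1 a" "r1 b = \<beta>2 b" "?I a b r1 \<le> ?I a m \<beta>1 + ?I m b \<beta>2 + \<epsilon>"
    using splice_paths[where h=h and w=w and \<rho>=\<rho> and Q=Q, OF mm(1,2) hw
        speed_bounded_deriv_subinterval[OF B1(1) order_refl mm(2)] sub[OF B1(2) order_refl mm(2)]
        speed_bounded_deriv_subinterval[OF B2(1) mm(1) order_refl] sub[OF B2(2) mm(1) order_refl] _ \<epsilon>]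
      mm(3) by auto
  obtain r2 r2' where R2: "speed_bounded_deriv s a b r2 r2'" "r2 ` {a..b} \<subseteq> {0..curve_len Q}"
      "r2 a = \<beta>2 a" "r2 b = \<beta>1 b" "?I a b r2 \<le> ?I a m \<beta>2 + ?I m b \<beta>1 + \<epsilon>"
    using splice_paths[where h=h and w=w and \<rho>=\<rho> and Q=Q, OF mm(1,2) hw
        speed_bounded_deriv_subinterval[OF B2(1) order_refl mm(2)] sub[OF B2(2) order_refl mm(2)]
        speed_bounded_deriv_subinterval[OF B1(1) mm(1) order_refl] sub[OF B1(2) mm(1) order_refl] _ \<epsilon>]
      mm(3) by auto
  have pc: "stationary_pieces 1 (\<lambda>j. if j = 0 then a else b) h a b"
    by (rule stationary_pieces_single[OF hw ab])
  have split: "?I a b f = ?I a m f + ?I m b f" if "speed_bounded_deriv s a b f f'" for f f'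
    using Henstock_Kurzweil_Integration.integral_combine[OF mm(1,2)
        stationary_pieces_integrable[OF pc speed_bounded_deriv_continuous_on[OF that]]] by simp
  have "r1 \<in> dog_paths Q s a b \<mu>1 l2" "r2 \<in> dog_paths Q s a b \<mu>2 l1"
    unfolding dog_paths_iff using R1 R2 B1 B2 by auto
  moreover have "cost \<rho> h Q a b r1 + cost \<rho> h Q a b r2 \<le> cost \<rho> h Q a b \<beta>1 + cost \<rho> h Q a b \<beta>2 + 2 * \<epsilon>"
    using R1(5) R2(5) split[OF B1(1)] split[OF B2(1)] unfolding cost_def by linarith
  ultimately show ?thesis by (rule that)
qed

lemma opt_cost_Monge:
  fixes h :: "real \<Rightarrow> 'a::real_normed_vector"
  assumes ab: "a \<le> b" and hw: "\<And>t. t \<in> {a<..<b} \<Longrightarrow> h t = w"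
    and m: "\<mu>2 < \<mu>1" and l: "l1 < l2"
  shows "opt_cost \<rho> s h Q a b \<mu>1 l2 + opt_cost \<rho> s h Q a b \<mu>2 l1
    \<le> opt_cost \<rho> s h Q a b \<mu>1 l1 + opt_cost \<rho> s h Q a b \<mu>2 l2"
proof (cases "opt_cost \<rho> s h Q a b \<mu>1 l1 = \<infinity> \<or> opt_cost \<rho> s h Q a b \<mu>2 l2 = \<infinity>")
  case True
  then have "opt_cost \<rho> s h Q a b \<mu>1 l1 + opt_cost \<rho> s h Q a b \<mu>2 l2 = \<infinity>"
    using opt_cost_nonneg[of \<rho> s h Q a b \<mu>1 l1] opt_cost_nonneg[of \<rho> s h Q a b \<mu>2 l2]
    by (elim disjE) (simp_all add: ereal_plus_eq_PInfty)
  then show ?thesis by (metis ereal_less_eq(1))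
next
  case False
  obtain r11 where r11: "opt_cost \<rho> s h Q a b \<mu>1 l1 = ereal r11"
    using False opt_cost_nonneg[of \<rho> s h Q a b \<mu>1 l1] by (cases "opt_cost \<rho> s h Q a b \<mu>1 l1") auto
  obtain r22 where r22: "opt_cost \<rho> s h Q a b \<mu>2 l2 = ereal r22"
    using False opt_cost_nonneg[of \<rho> s h Q a b \<mu>2 l2] by (cases "opt_cost \<rho> s h Q a b \<mu>2 l2") auto
  show ?thesis unfolding r11 r22
  proof (rule ereal_le_epsilon2)
    fix e :: real assume e: "0 < e"
    obtain \<beta>1 where \<beta>1: "\<beta>1 \<in> dog_paths Q s a b \<mu>1 l1" "cost \<rho> h Q a b \<beta>1 < r11 + e / 4"
      using opt_cost_approx[OF r11, of "e / 4"] e by auto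
    obtain \<beta>2 where \<beta>2: "\<beta>2 \<in> dog_paths Q s a b \<mu>2 l2" "cost \<rho> h Q a b \<beta>2 < r22 + e / 4"
      using opt_cost_approx[OF r22, of "e / 4"] e by auto
    obtain r1 r2 where r: "r1 \<in> dog_paths Q s a b \<mu>1 l2" "r2 \<in> dog_paths Q s a b \<mu>2 l1"
      "cost \<rho> h Q a b r1 + cost \<rho> h Q a b r2 \<le> cost \<rho> h Q a b \<beta>1 + cost \<rho> h Q a b \<beta>2 + 2 * (e / 4)"
      using exchange_tails_at_crossing[where \<epsilon>="e / 4" and \<rho>=\<rho> and h=h and w=w, OF ab hw \<beta>1(1) \<beta>2(1) m l] e by auto
    have "opt_cost \<rho> s h Q a b \<mu>1 l2 + opt_cost \<rho> s h Q a b \<mu>2 l1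
        \<le> ereal (cost \<rho> h Q a b r1) + ereal (cost \<rho> h Q a b r2)"
      by (intro add_mono opt_cost_le r(1,2))
    also have "\<dots> \<le> ereal (r11 + r22 + e)" using r(3) \<beta>1(2) \<beta>2(2) by simp
    finally show "opt_cost \<rho> s h Q a b \<mu>1 l2 + opt_cost \<rho> s h Q a b \<mu>2 l1 \<le> ereal r11 + ereal r22 + ereal e"
      by simp
  qed
qed

section \<open>Greatest minimisers under the Monge inequality\<close>

definition argmin_on :: "'a set \<Rightarrow> ('a \<Rightarrow> 'b::ord) \<Rightarrow> 'a set" where
  "argmin_on N \<phi> = {\<mu> \<in> N. \<forall>\<nu>\<in>N. \<phi> \<mu> \<le> \<phi> \<nu>}"

lemma GREATEST_mem_compact:
  fixes A :: "real set"
  assumes "compact A" "A \<noteq> {}"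
  shows "(GREATEST x. x \<in> A) \<in> A" "x \<in> A \<Longrightarrow> x \<le> (GREATEST x. x \<in> A)"
proof -
  obtain m where m: "m \<in> A" "\<forall>x\<in>A. x \<le> m" using compact_attains_sup[OF assms] by blast
  then have "(GREATEST x. x \<in> A) = m" by (intro Greatest_equality) auto
  then show "(GREATEST x. x \<in> A) \<in> A" "x \<in> A \<Longrightarrow> x \<le> (GREATEST x. x \<in> A)" using m by auto
qed

lemma compact_argmin_on:
  fixes \<Phi> :: "'a::metric_space \<Rightarrow> ereal"
  assumes N: "compact N" "N \<noteq> {}" and nonneg: "\<And>x. 0 \<le> \<Phi> x"
    and closed: "closed {x \<in> N. \<Phi> x < \<infinity>}"
    and cont: "continuous_on {x \<in> N. \<Phi> x < \<infinity>} (\<lambda>x. real_of_ereal (\<Phi> x))"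
  shows "compact (argmin_on N \<Phi>) \<and> argmin_on N \<Phi> \<noteq> {}"
proof (cases "{x \<in> N. \<Phi> x < \<infinity>} = {}")
  case True
  then have "argmin_on N \<Phi> = N" by (auto simp: argmin_on_def)
  then show ?thesis using N by simp
next
  case False
  let ?K = "{x \<in> N. \<Phi> x < \<infinity>}"
  let ?g = "\<lambda>x. real_of_ereal (\<Phi> x)"
  have fin: "\<Phi> x = ereal (?g x)" if "x \<in> ?K" for x
    using that nonneg[of x] by (cases "\<Phi> x") auto
  have "compact ?K" using compact_Int_closed[OF N(1) closed] by (simp add: Int_absorb1)
  then obtain m where m: "m \<in> ?K" "\<And>x. x \<in> ?K \<Longrightarrow> ?g m \<le> ?g x"
    using continuous_attains_inf[OF _ False cont] by blast
  have "argmin_on N \<Phi> = {x \<in> ?K. ?g x = ?g m}"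
  proof (intro equalityI subsetI)
    fix x assume x: "x \<in> argmin_on N \<Phi>"
    then have "\<Phi> x \<le> \<Phi> m" using m(1) by (auto simp: argmin_on_def)
    then have xK: "x \<in> ?K" using x m(1) by (auto simp: argmin_on_def)
    have "?g x \<le> ?g m" using real_of_ereal_positive_mono[OF nonneg \<open>\<Phi> x \<le> \<Phi> m\<close>] m(1) by auto
    then show "x \<in> {x \<in> ?K. ?g x = ?g m}" using xK m(2)[OF xK] by auto
  next
    fix x assume x: "x \<in> {x \<in> ?K. ?g x = ?g m}"
    have "\<Phi> x \<le> \<Phi> \<nu>" if \<nu>: "\<nu> \<in> N" for \<nu>
    proof (cases "\<Phi> \<nu> < \<infinity>")
      case True
      have "\<Phi> x = ereal (?g m)" using x fin[of x] by auto
      moreover have "\<Phi> \<nu> = ereal (?g \<nu>)" using fin[of \<nu>] True \<nu> by auto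
      moreover have "?g m \<le> ?g \<nu>" using m(2) True \<nu> by auto
      ultimately show ?thesis by (metis ereal_less_eq(3))
    qed (simp add: not_less)
    then show "x \<in> argmin_on N \<Phi>" using x by (simp add: argmin_on_def)
  qed
  moreover have "compact {x \<in> ?K. ?g x = ?g m}"
  proof -
    have "compact (?K \<inter> {x \<in> ?K. ?g x = ?g m})"
      using compact_Int_closed[OF \<open>compact ?K\<close> continuous_closed_preimage_constant[OF cont closed]] .
    moreover have "?K \<inter> {x \<in> ?K. ?g x = ?g m} = {x \<in> ?K. ?g x = ?g m}" by auto
    ultimately show ?thesis by simp
  qed
  ultimately show ?thesis using m(1) by auto
qed

text \<open>A larger greatest minimiser for \<open>l1\<close> than for \<open>l2 > l1\<close> would give a strict violation of
  the Monge inequality; \<open>feasible\<close> supplies the finiteness that this argument in \<^typ>\<open>ereal\<close>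
  needs.\<close>

lemma mono_on_greatest_argmin_Monge:
  fixes F :: "real \<Rightarrow> ereal" and f :: "real \<Rightarrow> real \<Rightarrow> ereal"
  assumes F_nonneg: "\<And>\<nu>. 0 \<le> F \<nu>" and f_nonneg: "\<And>\<nu> l. 0 \<le> f \<nu> l"
    and Monge: "\<And>\<mu>1 \<mu>2 l1 l2. \<mu>2 < \<mu>1 \<Longrightarrow> l1 < l2 \<Longrightarrow> f \<mu>1 l2 + f \<mu>2 l1 \<le> f \<mu>1 l1 + f \<mu>2 l2"
    and argmin: "\<And>l. l \<in> D \<Longrightarrow>
      compact (argmin_on N (\<lambda>\<nu>. F \<nu> + f \<nu> l)) \<and> argmin_on N (\<lambda>\<nu>. F \<nu> + f \<nu> l) \<noteq> {}"
    and feasible: "\<And>l1 l2. l1 \<in> D \<Longrightarrow> l2 \<in> D \<Longrightarrow> l1 \<le> l2 \<Longrightarrow>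
      \<exists>\<nu>\<in>N. F \<nu> + f \<nu> l2 < \<infinity> \<Longrightarrow> \<exists>\<nu>\<in>N. F \<nu> + f \<nu> l1 < \<infinity>"
  shows "mono_on D (\<lambda>l. GREATEST \<mu>. \<mu> \<in> argmin_on N (\<lambda>\<nu>. F \<nu> + f \<nu> l))"
proof (rule mono_onI, rule ccontr)
  fix l1 l2 assume l: "l1 \<in> D" "l2 \<in> D" "l1 \<le> l2"
  let ?\<Phi> = "\<lambda>l \<nu>. F \<nu> + f \<nu> l"
  let ?m = "\<lambda>l. GREATEST \<mu>. \<mu> \<in> argmin_on N (?\<Phi> l)"
  assume "\<not> ?m l1 \<le> ?m l2"
  then have lt: "?m l2 < ?m l1" by simp
  note G1 = GREATEST_mem_compact[OF conjunct1[OF argmin[OF l(1)]] conjunct2[OF argmin[OF l(1)]]]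
  note G2 = GREATEST_mem_compact[OF conjunct1[OF argmin[OF l(2)]] conjunct2[OF argmin[OF l(2)]]]
  have "l1 \<noteq> l2" using lt by auto
  then have l12: "l1 < l2" using l(3) by simp
  have m1N: "?m l1 \<in> N" using G1(1) by (simp add: argmin_on_def)
  have "?m l1 \<notin> argmin_on N (?\<Phi> l2)" using G2(2)[of "?m l1"] lt by auto
  then obtain \<nu> where "\<nu> \<in> N" "?\<Phi> l2 \<nu> < ?\<Phi> l2 (?m l1)"
    using m1N by (auto simp: argmin_on_def not_le)
  then have strict: "?\<Phi> l2 (?m l2) < ?\<Phi> l2 (?m l1)"
    using G2(1) by (auto simp: argmin_on_def intro: le_less_trans)
  then have "?\<Phi> l2 (?m l2) < \<infinity>" using less_le_trans by fastforce
  then obtain \<nu>1 where "\<nu>1 \<in> N" "?\<Phi> l1 \<nu>1 < \<infinity>"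
    using feasible[OF l] G2(1) by (auto simp: argmin_on_def)
  then have fin1: "?\<Phi> l1 (?m l1) < \<infinity>"
    using G1(1) by (auto simp: argmin_on_def intro: le_less_trans)
  have weak: "?\<Phi> l1 (?m l1) \<le> ?\<Phi> l1 (?m l2)"
    using G1(1) G2(1) by (auto simp: argmin_on_def)
  have sum_fin: "a + b < \<infinity> \<longleftrightarrow> a < \<infinity> \<and> b < \<infinity>" if "0 \<le> a" "0 \<le> b" for a b :: ereal
    using that by (cases a; cases b) auto
  have M: "f (?m l1) l2 + f (?m l2) l1 \<le> f (?m l1) l1 + f (?m l2) l2"
    by (rule Monge[OF lt l12])
  have fin2: "?\<Phi> l2 (?m l2) < \<infinity>" using strict by (auto simp: less_top[symmetric])
  have "f (?m l1) l1 + f (?m l2) l2 < \<infinity>"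
    using fin1 fin2 sum_fin F_nonneg f_nonneg by auto
  then have "f (?m l1) l2 + f (?m l2) l1 < \<infinity>" by (rule le_less_trans[OF M])
  then have fins: "F (?m l1) < \<infinity>" "F (?m l2) < \<infinity>" "f (?m l1) l1 < \<infinity>" "f (?m l2) l2 < \<infinity>"
    "f (?m l1) l2 < \<infinity>" "f (?m l2) l1 < \<infinity>"
    using fin1 fin2 sum_fin F_nonneg f_nonneg by auto
  have real: "\<exists>r. x = ereal r" if "0 \<le> x" "x < \<infinity>" for x :: ereal
    using that by (cases x) auto
  obtain a1 a2 b11 b22 b12 b21 where
    "F (?m l1) = ereal a1" "F (?m l2) = ereal a2" "f (?m l1) l1 = ereal b11"
    "f (?m l2) l2 = ereal b22" "f (?m l1) l2 = ereal b12" "f (?m l2) l1 = ereal b21"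
    using real[OF F_nonneg fins(1)] real[OF F_nonneg fins(2)] real[OF f_nonneg fins(3)]
      real[OF f_nonneg fins(4)] real[OF f_nonneg fins(5)] real[OF f_nonneg fins(6)] by blast
  then show False using weak strict M by simp
qed

lemma ereal_add_less_top_iff:
  fixes a b :: ereal
  assumes "0 \<le> a" "0 \<le> b"
  shows "a + b < \<infinity> \<longleftrightarrow> a < \<infinity> \<and> b < \<infinity>"
  using assms by (cases a; cases b) auto

lemma two_stage_cost_finite_iff:
  assumes "0 \<le> T0" "T0 \<le> T1"
  shows "opt_cost \<rho> s h Q 0 T0 0 \<nu> + opt_cost \<rho> s h Q T0 T1 \<nu> l < \<infinity> \<longleftrightarrow>
    0 \<le> s \<and> \<nu> \<in> {0..curve_len Q} \<and> l \<in> {0..curve_len Q} \<and> \<bar>\<nu>\<bar> \<le> s * T0 \<and> \<bar>l - \<nu>\<bar> \<le> s * (T1 - T0)"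
  unfolding ereal_add_less_top_iff[OF opt_cost_nonneg opt_cost_nonneg]
    opt_cost_finite_iff[OF assms(1)] opt_cost_finite_iff[OF assms(2)]
  using curve_len_nonneg[of Q] by auto

lemma two_stage_cost_feasible_below:
  assumes T: "0 \<le> T0" "T0 \<le> T1" and l: "l1 \<in> {0..curve_len Q}" "l1 \<le> l2"
    and \<nu>: "\<nu> \<in> {0..curve_len Q}" "opt_cost \<rho> s h Q 0 T0 0 \<nu> + opt_cost \<rho> s h Q T0 T1 \<nu> l2 < \<infinity>"
  shows "\<exists>\<nu>\<in>{0..curve_len Q}. opt_cost \<rho> s h Q 0 T0 0 \<nu> + opt_cost \<rho> s h Q T0 T1 \<nu> l1 < \<infinity>"
proof (rule bexI)
  have "\<bar>l1 - min \<nu> l1\<bar> \<le> \<bar>l2 - \<nu>\<bar>" "\<bar>min \<nu> l1\<bar> \<le> \<bar>\<nu>\<bar>" using l \<nu>(1) by auto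
  then show "opt_cost \<rho> s h Q 0 T0 0 (min \<nu> l1) + opt_cost \<rho> s h Q T0 T1 (min \<nu> l1) l1 < \<infinity>"
    using \<nu>(2) l(1) unfolding two_stage_cost_finite_iff[OF T] by (auto simp: min_def)
  show "min \<nu> l1 \<in> {0..curve_len Q}" using l(1) \<nu>(1) by (auto simp: min_def)
qed

lemma two_stage_cost_lipschitz:
  fixes h :: "real \<Rightarrow> 'a::real_normed_vector"
  assumes pieces: "stationary_pieces k b h 0 T0" and hw: "\<And>t. t \<in> {T0<..<T1} \<Longrightarrow> h t = w"
    and T01: "T0 \<le> T1" and s: "0 < s"
    and x: "opt_cost \<rho> s h Q 0 T0 0 x + opt_cost \<rho> s h Q T0 T1 x l < \<infinity>"
    and y: "opt_cost \<rho> s h Q 0 T0 0 y + opt_cost \<rho> s h Q T0 T1 y l < \<infinity>"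
  shows "real_of_ereal (opt_cost \<rho> s h Q 0 T0 0 x + opt_cost \<rho> s h Q T0 T1 x l)
    \<le> real_of_ereal (opt_cost \<rho> s h Q 0 T0 0 y + opt_cost \<rho> s h Q T0 T1 y l) + (k + 1) / s * \<bar>x - y\<bar>"
proof -
  let ?F = "opt_cost \<rho> s h Q 0 T0 0" and ?f = "\<lambda>\<nu>. opt_cost \<rho> s h Q T0 T1 \<nu> l"
  have T0: "0 \<le> T0" using stationary_pieces_le[OF pieces] .
  note fin = two_stage_cost_finite_iff[OF T0 T01]
  have xK: "x \<in> {0..curve_len Q}" "\<bar>x\<bar> \<le> s * T0" "\<bar>l - x\<bar> \<le> s * (T1 - T0)"
    using x unfolding fin by auto
  have F_le: "?F x \<le> ?F y + ereal (k * \<bar>x - y\<bar> / s)"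
    by (rule opt_cost_endpoint_lipschitz[OF T0 s pieces]) (use xK in auto)
  have "?f x = opt_cost \<rho> s h Q T0 T1 l x" by (rule opt_cost_swap[OF T01 hw])
  also have "\<dots> \<le> opt_cost \<rho> s h Q T0 T1 l y + ereal (real 1 * \<bar>x - y\<bar> / s)"
    by (rule opt_cost_endpoint_lipschitz[OF T01 s stationary_pieces_single[OF hw T01]])
      (use xK in \<open>auto simp: abs_minus_commute\<close>)
  also have "opt_cost \<rho> s h Q T0 T1 l y = ?f y" by (rule opt_cost_swap[OF T01 hw, symmetric])
  finally have f_le: "?f x \<le> ?f y + ereal (\<bar>x - y\<bar> / s)" by simp
  have fins: "?F x < \<infinity>" "?f x < \<infinity>" "?F y < \<infinity>" "?f y < \<infinity>"
    using x y unfolding ereal_add_less_top_iff[OF opt_cost_nonneg opt_cost_nonneg] by auto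
  have real: "\<exists>r. z = ereal r" if "0 \<le> z" "z < \<infinity>" for z :: ereal
    using that by (cases z) auto
  obtain a1 b1 a2 b2 where eqs: "?F x = ereal a1" "?f x = ereal b1" "?F y = ereal a2" "?f y = ereal b2"
    using real[OF opt_cost_nonneg fins(1)] real[OF opt_cost_nonneg fins(2)]
      real[OF opt_cost_nonneg fins(3)] real[OF opt_cost_nonneg fins(4)] by blast
  have "(real k + 1) / s * \<bar>x - y\<bar> = real k * \<bar>x - y\<bar> / s + \<bar>x - y\<bar> / s"
    by (simp add: add_divide_distrib distrib_right)
  then show ?thesis using F_le f_le unfolding eqs by simp
qed

lemma argmin_two_stage_cost:
  fixes h :: "real \<Rightarrow> 'a::real_normed_vector"
  assumes pieces: "stationary_pieces k b h 0 T0" and hw: "\<And>t. t \<in> {T0<..<T1} \<Longrightarrow> h t = w"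
    and T01: "T0 \<le> T1"
  shows "compact (argmin_on {0..curve_len Q} (\<lambda>\<nu>. opt_cost \<rho> s h Q 0 T0 0 \<nu> + opt_cost \<rho> s h Q T0 T1 \<nu> l))
    \<and> argmin_on {0..curve_len Q} (\<lambda>\<nu>. opt_cost \<rho> s h Q 0 T0 0 \<nu> + opt_cost \<rho> s h Q T0 T1 \<nu> l) \<noteq> {}"
proof (rule compact_argmin_on)
  let ?\<Phi> = "\<lambda>\<nu>. opt_cost \<rho> s h Q 0 T0 0 \<nu> + opt_cost \<rho> s h Q T0 T1 \<nu> l"
  let ?K = "{\<nu> \<in> {0..curve_len Q}. ?\<Phi> \<nu> < \<infinity>}"
  have T0: "0 \<le> T0" using stationary_pieces_le[OF pieces] .
  have K: "?K = {0..curve_len Q} \<inter> {\<nu>. 0 \<le> s \<and> l \<in> {0..curve_len Q} \<and> \<bar>\<nu>\<bar> \<le> s * T0 \<and> \<bar>l - \<nu>\<bar> \<le> s * (T1 - T0)}"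
    unfolding two_stage_cost_finite_iff[OF T0 T01] by auto
  show "closed ?K"
    unfolding K by (intro closed_Int closed_atLeastAtMost closed_Collect_conj closed_Collect_le
        continuous_intros closed_Collect_const)
  show "continuous_on ?K (\<lambda>\<nu>. real_of_ereal (?\<Phi> \<nu>))"
  proof (cases "0 < s")
    case True
    have "((real k + 1) / s)-lipschitz_on ?K (\<lambda>\<nu>. real_of_ereal (?\<Phi> \<nu>))"
    proof (rule lipschitz_onI)
      fix x y assume "x \<in> ?K" "y \<in> ?K"
      then show "dist (real_of_ereal (?\<Phi> x)) (real_of_ereal (?\<Phi> y)) \<le> (real k + 1) / s * dist x y"
        using two_stage_cost_lipschitz[OF pieces hw T01 True, of \<rho> Q x l y]
          two_stage_cost_lipschitz[OF pieces hw T01 True, of \<rho> Q y l x]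
        by (auto simp: dist_real_def abs_minus_commute)
    qed (use True in auto)
    then show ?thesis by (rule lipschitz_on_continuous_on)
  next
    case False
    then have "?K \<subseteq> {0}" unfolding K using T0 by (auto simp: mult_le_0_iff)
    then show ?thesis by (rule continuous_on_subset[OF continuous_on_sing])
  qed
qed (auto simp: curve_len_nonneg add_nonneg_nonneg opt_cost_nonneg)

lemma Psi_eq_greatest_argmin:
  "Psi \<rho> s h P Q i l = (GREATEST \<mu>. \<mu> \<in> argmin_on {0..curve_len Q}
      (\<lambda>\<nu>. opt_cost \<rho> s h Q 0 (vx P (i - 1)) 0 \<nu> + opt_cost \<rho> s h Q (vx P (i - 1)) (vx P i) \<nu> l))"
  unfolding Psi_def argmin_on_def F_cost_eq_opt_cost f_cost_eq_opt_cost by simp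

theorem mainTheorem7:
  fixes P Q :: "'a::euclidean_space list" and \<rho> s :: real
    and h :: "real \<Rightarrow> 'a" and i :: nat
  assumes "Q \<noteq> []"
    and "1 \<le> i" and "i < length P"
    and "hiker_on_vertices P h"
  shows "mono_on {0..curve_len Q} (Psi \<rho> s h P Q i)"
proof -
  define T0 T1 where "T0 = vx P (i - 1)" and "T1 = vx P i"
  have pieces: "stationary_pieces (i - 1) (vx P) h 0 T0"
    unfolding T0_def by (rule stationary_pieces_vx[OF assms(2-4)])
  obtain w where hw: "\<And>t. t \<in> {T0<..<T1} \<Longrightarrow> h t = w"
    using assms(2-4) unfolding hiker_on_vertices_def T0_def T1_def by blast
  have T01: "T0 \<le> T1" using vx_le_Suc[of "i - 1" P] assms(2,3) by (simp add: T0_def T1_def)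
  have T0: "0 \<le> T0" using stationary_pieces_le[OF pieces] .
  show ?thesis
    unfolding Psi_eq_greatest_argmin T0_def[symmetric] T1_def[symmetric]
  proof (rule mono_on_greatest_argmin_Monge[where F="\<lambda>\<nu>. opt_cost \<rho> s h Q 0 T0 0 \<nu>"
        and f="\<lambda>\<nu> l. opt_cost \<rho> s h Q T0 T1 \<nu> l"])
    show "opt_cost \<rho> s h Q T0 T1 \<mu>1 l2 + opt_cost \<rho> s h Q T0 T1 \<mu>2 l1
        \<le> opt_cost \<rho> s h Q T0 T1 \<mu>1 l1 + opt_cost \<rho> s h Q T0 T1 \<mu>2 l2"
      if "\<mu>2 < \<mu>1" "l1 < l2" for \<mu>1 \<mu>2 l1 l2
      using opt_cost_Monge[OF T01 hw that] .
    show "compact (argmin_on {0..curve_len Q} (\<lambda>\<nu>. opt_cost \<rho> s h Q 0 T0 0 \<nu> + opt_cost \<rho> s h Q T0 T1 \<nu> l))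
      \<and> argmin_on {0..curve_len Q} (\<lambda>\<nu>. opt_cost \<rho> s h Q 0 T0 0 \<nu> + opt_cost \<rho> s h Q T0 T1 \<nu> l) \<noteq> {}" for l
      by (rule argmin_two_stage_cost[OF pieces hw T01])
    show "\<exists>\<nu>\<in>{0..curve_len Q}. opt_cost \<rho> s h Q 0 T0 0 \<nu> + opt_cost \<rho> s h Q T0 T1 \<nu> l1 < \<infinity>"
      if "l1 \<in> {0..curve_len Q}" "l1 \<le> l2"
        "\<exists>\<nu>\<in>{0..curve_len Q}. opt_cost \<rho> s h Q 0 T0 0 \<nu> + opt_cost \<rho> s h Q T0 T1 \<nu> l2 < \<infinity>"
      for l1 l2
      using two_stage_cost_feasible_below[OF T0 T01 that(1,2)] that(3) by blast
  qed (rule opt_cost_nonneg)+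
qed
end
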